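(* Under $A_0$ and $A_1'$, with high frequency sampling and $h_n=c\,n^{-1/(d+2)}$ for some $0<c<\infty$: - if $\gamma_0<1$ and $\delta_n=d_1h_n^d$ with $0<d_1<\infty$, then $\mathrm{MISE}(\hat f_n^H)=O(T_n^{-1})$; - if $\gamma_0=1$ and $\delta_n=d_2h_n^d\ln(h_n^{-d})$ with $0<d_2<\infty$, then $\mathrm{MISE}(\hat f_n^H)=O(T_n^{-1}\ln T_n)$; - if $\gamma_0>1$ and $\delta_n=d_3h_n^{d/\gamma_0}$ with $0<d_3<\infty$, then $\mathrm{MISE}(\hat f_n^H)=O\big(T_n^{-2\gamma_0/(2\gamma_0+d(\gamma_0-1))}\big)$. Here $T_n=n\delta_n$.
   Context: Let $\{X_t,t\in\mathbb R\}$ be a measurable $\mathbb R^d$-valued process ($d\ge1$). Every $X_t$ has Lebesgue density $f$. For all $s\ne t$ the pair $(X_s,X_t)$ has a joint density $f_{(X_s,X_t)}=f_{(X_0,X_{|t-s|})}=:f_{|t-s|}$. For $u>0$ put $g_u(y,z):=f_u(y,z)-f(y)f(z)$. High frequency sampling: $t_k=k\delta_n$ for $0\le k\le n$, with $\delta_n\to0$ and $T_n:=n\delta_n\to\infty$. Histogram. Let $\Pi_n=\{\pi_{nj},j\in\mathbb Z^d\}$ be the partition of $\mathbb R^d$ into half-open hypercubes of side $h_n$. Set $\hat f_n^H(x)=\frac{1}{nh_n^d}\sum_{k=1}^n\mathbf 1_{\pi_{nj}}(X_{t_k})$ for $x\in\pi_{nj}$. $\mathrm{MISE}(\hat f_n)=\mathrm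 E\int(\hat f_n-f)^2$. Assumptions. - $A_0$: (i) $f\in\mathcal C^2(\mathbb R^d)$ with all partial derivatives square Riemann-integrable; (ii) $f$ continuous and bounded. - $A_1'(i)$: there exist $\gamma_0>0$, $u_0>0$ and a positive, continuous, integrable $\varphi$ with $\sup_zf_u(y,z)\le\varphi(y)u^{-\gamma_0}$ for all $y$ and all $0<u\le u_0$. - $A_1'(ii)$: there exist a positive, continuous, integrable $k$ and a bounded, ultimately decreasing $\pi$ with $\int_{u_1}^\infty\pi<\infty$ for some $u_1>u_0$, such that $\sup_z|g_u(y,z)|\le k(y)\pi(u)$ for all $y$ and all $u\ge u_0$. *)

theory Defs
  imports "HOL-Probability.Probability"
begin

definition hcube :: "real \<Rightarrow> int ^ 'd \<Rightarrow> (real ^ 'd::finite) set" where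
  "hcube h j = {x. \<forall>i. real_of_int (j $ i) * h \<le> x $ i \<and> x $ i < (real_of_int (j $ i) + 1) * h}"

definition cell_index :: "real \<Rightarrow> real ^ 'd::finite \<Rightarrow> int ^ 'd" where
  "cell_index h x = (\<chi> i. \<lfloor>x $ i / h\<rfloor>)"

definition hist_est :: "(real \<Rightarrow> 'a \<Rightarrow> real ^ 'd::finite) \<Rightarrow> real \<Rightarrow> real \<Rightarrow> nat \<Rightarrow> 'a \<Rightarrow> real ^ 'd \<Rightarrow> real" where
  "hist_est X \<delta> h n \<omega> x =
     (1 / (real n * h ^ CARD('d))) * (\<Sum>k=1..n. indicator (hcube h (cell_index h x)) (X (real k * \<delta>) \<omega>))"

definition MISE :: "'a measure \<Rightarrow> (real \<Rightarrow> 'a \<Rightarrow> real ^ 'd::finite) \<Rightarrow> (real ^ 'd \<Rightarrow> real) \<Rightarrow> real \<Rightarrow> real \<Rightarrow> nat \<Rightarrow> ennreal" where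
  "MISE M X f \<delta> h n =
     (\<integral>\<^sup>+ \<omega>. (\<integral>\<^sup>+ x. ennreal ((hist_est X \<delta> h n \<omega> x - f x)\<^sup>2) \<partial>lborel) \<partial>M)"

end

theory Submission
  imports Defs
begin

(*
  The proof is a bias-variance decomposition carried out cell by cell.
  * Bias: the histogram at x estimates the average of f over the cell of x.  By Jensen on the
    cell and the fundamental theorem of calculus along segments inside the (convex) cell, the
    integrated squared bias is at most  d 2^d h^2 \<integral>|\<nabla>f|^2  (lemma histogram_bias_le).
  * Variance: the histogram at x is a scaled count of visits to one cell.  Its second moment
    involves the joint probabilities of pairs of visits, which A1'(i) bounds at short lags
    (joint density O(u^-gamma0)) and A1'(ii) at long lags (dependence O(pi(u))).  Summing over
    pairs and integrating over x gives  MISE <= C_b h^2 + 1/(n h^d) + (2/n) \<Sum>_m w(m delta)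
    (lemmas MISE_le, MISE_general_bound), where the short lags contribute
    Phi delta^-gamma0 \<Sum>_{m delta <= u0} m^-gamma0 and the long lags O(1/delta).
  * Rates: with h = c n^(-1/(d+2)) the bias is of the order of 1/(n h^d); the partial sums of
    m^-gamma0 are O(delta^(gamma0-1)), O(ln(1/delta)) or O(1) according as gamma0 < 1, = 1 or > 1,
    and the three choices of delta turn the bound into the rates 1/T, ln T / T and T^-e
    (lemmas MISE_rate_lt1, MISE_rate_eq1, MISE_rate_gt1).
*)

section \<open>The partition into half-open cubes\<close>

lemma floor_eq_iff_in_interval:
  assumes "0 < h"
  shows "(real_of_int j * h \<le> y \<and> y < (real_of_int j + 1) * h) \<longleftrightarrow> \<lfloor>y / h\<rfloor> = j"
proof -
  have "(real_of_int j * h \<le> y) \<longleftrightarrow> real_of_int j \<le> y / h" using assms by (simp add: le_divide_eq)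
  moreover have "(y < (real_of_int j + 1) * h) \<longleftrightarrow> y / h < real_of_int j + 1" using assms by (simp add: divide_less_eq)
  ultimately show ?thesis by (simp add: floor_eq_iff)
qed

lemma mem_hcube_iff:
  fixes y :: "real ^ 'd::finite"
  assumes "0 < h"
  shows "y \<in> hcube h j \<longleftrightarrow> cell_index h y = j"
  using floor_eq_iff_in_interval[OF assms]
  by (auto simp: hcube_def cell_index_def vec_eq_iff)

lemma hcube_sets[measurable]:
  "hcube h j \<in> sets (borel :: (real ^ 'd::finite) measure)"
  unfolding hcube_def by measurable

text \<open>A cell of side \<open>h\<close> has volume \<open>h^d\<close>: it lies between an open and a closed box.\<close>
lemma emeasure_hcube:
  fixes j :: "int ^ 'd::finite"
  assumes h: "0 < h"
  shows "emeasure lborel (hcube h j) = ennreal (h ^ CARD('d))"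
proof -
  define a :: "real ^ 'd" where "a = (\<chi> i. real_of_int (j $ i) * h)"
  define b :: "real ^ 'd" where "b = (\<chi> i. (real_of_int (j $ i) + 1) * h)"
  have ab: "\<And>i. a $ i \<le> b $ i" using h by (simp add: a_def b_def distrib_right)
  have inner: "box a b \<subseteq> hcube h j" by (auto simp: mem_box_cart hcube_def a_def b_def less_imp_le)
  have outer: "hcube h j \<subseteq> cbox a b" by (auto simp: mem_box_cart hcube_def a_def b_def less_imp_le)
  have "a \<in> cbox a b" using ab by (simp add: mem_box_cart)
  then have "cbox a b \<noteq> {}" by blast
  then have "measure lborel (cbox a b) = h ^ CARD('d)"
    using content_cbox_cart[of a b] by (simp add: a_def b_def algebra_simps)
  then have closed_box: "emeasure lborel (cbox a b) = ennreal (h ^ CARD('d))"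
    using emeasure_lborel_cbox_finite[of a b] emeasure_eq_ennreal_measure[of lborel "cbox a b"] by simp
  then have "emeasure lborel (box a b) = ennreal (h ^ CARD('d))"
    by (simp add: emeasure_lborel_box_eq emeasure_lborel_cbox_eq)
  then have "ennreal (h ^ CARD('d)) \<le> emeasure lborel (hcube h j)"
    using emeasure_mono[OF inner] by (metis hcube_sets sets_lborel)
  moreover have "emeasure lborel (hcube h j) \<le> ennreal (h ^ CARD('d))"
    using emeasure_mono[OF outer, of lborel] closed_box by simp
  ultimately show ?thesis by (rule antisym[rotated])
qed

lemma measurable_vec_nth_comp[measurable (raw)]:
  "g \<in> borel_measurable M \<Longrightarrow> (\<lambda>x. (g x :: real ^ 'd::finite) $ i) \<in> borel_measurable M"
  using measurable_compose[OF _ borel_measurable_nth] by blast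

lemma measurable_floor_comp[measurable (raw)]:
  "g \<in> borel_measurable M \<Longrightarrow> (\<lambda>x. \<lfloor>g x :: real\<rfloor>) \<in> M \<rightarrow>\<^sub>M count_space UNIV"
  using measurable_compose[OF _ measurable_real_floor] by blast

lemma pred_same_cell[measurable]:
  fixes g g' :: "'a \<Rightarrow> real ^ 'd::finite"
  assumes [measurable]: "g \<in> borel_measurable M" "g' \<in> borel_measurable M"
  shows "Measurable.pred M (\<lambda>w. cell_index h (g w) = cell_index h (g' w))"
proof -
  have "cell_index h (g w) = cell_index h (g' w) \<longleftrightarrow> (\<forall>i. \<lfloor>g w $ i / h\<rfloor> = \<lfloor>g' w $ i / h\<rfloor>)" for w
    by (simp add: cell_index_def vec_eq_iff)
  then show ?thesis by simp
qed

text \<open>Cell membership as an equality of cell indices; this is the symmetric, measurable form used below.\<close>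
lemma indicator_cell:
  fixes x y :: "real ^ 'd::finite"
  assumes "0 < h"
  shows "indicator (hcube h (cell_index h x)) y = (if cell_index h y = cell_index h x then 1 else 0)"
  by (simp add: indicator_def mem_hcube_iff[OF assms])

lemma nn_integral_cell_partition:
  fixes \<psi> :: "real ^ 'd::finite \<Rightarrow> ennreal"
  assumes h: "0 < h" and [measurable]: "\<psi> \<in> borel_measurable borel"
  shows "(\<integral>\<^sup>+ x. \<integral>\<^sup>+ y. indicator (hcube h (cell_index h x)) y * \<psi> y \<partial>lborel \<partial>lborel)
         = ennreal (h ^ CARD('d)) * (\<integral>\<^sup>+ y. \<psi> y \<partial>lborel)"
proof -
  have "(\<integral>\<^sup>+ x. \<integral>\<^sup>+ y. indicator (hcube h (cell_index h x)) y * \<psi> y \<partial>lborel \<partial>lborel)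
      = (\<integral>\<^sup>+ x. \<integral>\<^sup>+ y. (if cell_index h y = cell_index h x then 1 else 0) * \<psi> y \<partial>lborel \<partial>lborel)"
    by (simp add: indicator_cell[OF h])
  also have "\<dots> = (\<integral>\<^sup>+ y. \<integral>\<^sup>+ x. (if cell_index h y = cell_index h x then 1 else 0) * \<psi> y \<partial>lborel \<partial>lborel)"
    by (rule lborel_pair.Fubini'[symmetric]) measurable
  also have "\<dots> = (\<integral>\<^sup>+ y. \<psi> y * (\<integral>\<^sup>+ x. indicator (hcube h (cell_index h y)) x \<partial>lborel) \<partial>lborel)"
  proof (rule nn_integral_cong)
    fix y :: "real ^ 'd"
    have "\<And>x. (if cell_index h y = cell_index h x then 1 else 0) * \<psi> y
           = \<psi> y * indicator (hcube h (cell_index h y)) x"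
      by (simp add: indicator_def mem_hcube_iff[OF h] eq_commute)
    then show "(\<integral>\<^sup>+ x. (if cell_index h y = cell_index h x then 1 else 0) * \<psi> y \<partial>lborel)
        = \<psi> y * (\<integral>\<^sup>+ x. indicator (hcube h (cell_index h y)) x \<partial>lborel)"
      by (simp add: nn_integral_cmult)
  qed
  also have "\<dots> = (\<integral>\<^sup>+ y. \<psi> y * ennreal (h ^ CARD('d)) \<partial>lborel)"
    by (simp add: emeasure_hcube[OF h])
  finally show ?thesis by (simp add: nn_integral_multc mult.commute)
qed

lemma nn_integral_indicator_real:
  assumes "integrable lborel g" "A \<in> sets borel" "\<And>y. 0 \<le> g y"
  shows "(\<integral>\<^sup>+ y. ennreal (g y) * indicator A y \<partial>lborel) = ennreal (\<integral> y. g y * indicator A y \<partial>lborel)"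
proof -
  have int: "integrable lborel (\<lambda>y. g y * indicator A y :: real)"
    using integrable_mult_indicator[of A lborel g] assms by (simp add: mult.commute)
  have "(\<integral>\<^sup>+ y. ennreal (g y) * indicator A y \<partial>lborel) = (\<integral>\<^sup>+ y. ennreal (g y * indicator A y) \<partial>lborel)"
    by (rule nn_integral_cong) (simp add: indicator_def)
  also have "\<dots> = ennreal (\<integral> y. g y * indicator A y \<partial>lborel)"
    by (rule nn_integral_eq_integral[OF int]) (simp add: assms(3))
  finally show ?thesis .
qed

text \<open>For the density \<open>f\<close> this is the
  probability that a sample falls in the cell of \<open>x\<close>, i.e. the mean of the histogram times \<open>h\<^sup>d\<close>.\<close>
definition cell_mass :: "(real ^ 'd::finite \<Rightarrow> real) \<Rightarrow> real \<Rightarrow> real ^ 'd \<Rightarrow> real" where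
  "cell_mass g h x = (\<integral> y. g y * indicator (hcube h (cell_index h x)) y \<partial>lborel)"

lemma cell_mass_nonneg: "(\<And>y. 0 \<le> g y) \<Longrightarrow> 0 \<le> cell_mass g h x"
  unfolding cell_mass_def by (rule integral_nonneg_AE) (auto intro!: AE_I2 mult_nonneg_nonneg)

lemma cell_mass_measurable[measurable]:
  fixes g :: "real ^ 'd::finite \<Rightarrow> real"
  assumes h: "0 < h" and [measurable]: "g \<in> borel_measurable borel"
  shows "cell_mass g h \<in> borel_measurable borel"
proof -
  have "cell_mass g h = (\<lambda>x. \<integral> y. g y * (if cell_index h y = cell_index h x then 1 else 0) \<partial>lborel)"
    by (simp add: cell_mass_def indicator_cell[OF h] fun_eq_iff)
  also have "\<dots> \<in> borel_measurable borel"
    by (rule lborel.borel_measurable_lebesgue_integral) measurable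
  finally show ?thesis .
qed

lemma nn_integral_cell_mass:
  fixes g :: "real ^ 'd::finite \<Rightarrow> real"
  assumes h: "0 < h" and gi: "integrable lborel g" and g0: "\<And>y. 0 \<le> g y"
  shows "(\<integral>\<^sup>+ x. ennreal (cell_mass g h x) \<partial>lborel) = ennreal (h ^ CARD('d)) * ennreal (\<integral> y. g y \<partial>lborel)"
proof -
  have [measurable]: "g \<in> borel_measurable borel" using gi by (simp add: borel_measurable_integrable)
  have "(\<integral>\<^sup>+ x. ennreal (cell_mass g h x) \<partial>lborel)
      = (\<integral>\<^sup>+ x. \<integral>\<^sup>+ y. indicator (hcube h (cell_index h x)) y * ennreal (g y) \<partial>lborel \<partial>lborel)"
    by (intro nn_integral_cong)
       (simp add: cell_mass_def nn_integral_indicator_real[OF gi _ g0, symmetric] mult.commute)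
  also have "\<dots> = ennreal (h ^ CARD('d)) * (\<integral>\<^sup>+ y. ennreal (g y) \<partial>lborel)"
    by (rule nn_integral_cell_partition[OF h]) measurable
  also have "(\<integral>\<^sup>+ y. ennreal (g y) \<partial>lborel) = ennreal (\<integral> y. g y \<partial>lborel)"
    by (rule nn_integral_eq_integral[OF gi]) (simp add: g0)
  finally show ?thesis .
qed

section \<open>Second moment of a scaled count of visits to a set\<close>

lemma (in prob_space) count_second_moment:
  fixes Y :: "nat \<Rightarrow> 'a \<Rightarrow> 'b" and A :: "'b set"
  assumes [measurable]: "\<And>k. Y k \<in> measurable M N" "A \<in> sets N"
    and marg: "\<And>k. k \<in> {1..n} \<Longrightarrow> prob {\<omega>\<in>space M. Y k \<omega> \<in> A} = p"
    and pair: "\<And>k l. k \<in> {1..n} \<Longrightarrow> l \<in> {1..n} \<Longrightarrow> k \<noteq> l \<Longrightarrow>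
        prob {\<omega>\<in>space M. Y k \<omega> \<in> A \<and> Y l \<omega> \<in> A} \<le> p\<^sup>2 + b k l"
  shows "expectation (\<lambda>\<omega>. (\<Sum>k=1..n. indicator A (Y k \<omega>) :: real)\<^sup>2)
     \<le> real n * p + real n * real n * p\<^sup>2 + (\<Sum>k\<in>{1..n}. \<Sum>l\<in>{1..n}-{k}. b k l)"
proof -
  define P where "P k l = prob {\<omega>\<in>space M. Y k \<omega> \<in> A \<and> Y l \<omega> \<in> A}" for k l
  define I where "I k l \<omega> = (indicator A (Y k \<omega>) * indicator A (Y l \<omega>) :: real)" for k l \<omega>
  have product: "expectation (I k l) = P k l" for k l
  proof -
    have "expectation (I k l) = expectation (indicator {\<omega>\<in>space M. Y k \<omega> \<in> A \<and> Y l \<omega> \<in> A})"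
      by (rule Bochner_Integration.integral_cong) (auto simp: I_def indicator_def)
    then show ?thesis by (simp add: P_def)
  qed
  have int: "integrable M (I k l)" for k l
    unfolding I_def by (rule integrable_const_bound[where B=1]) (auto simp: indicator_def)
  have "(\<Sum>k=1..n. indicator A (Y k \<omega>) :: real)\<^sup>2 = (\<Sum>k=1..n. \<Sum>l=1..n. I k l \<omega>)" for \<omega>
    by (simp add: power2_eq_square sum_product I_def)
  then have "expectation (\<lambda>\<omega>. (\<Sum>k=1..n. indicator A (Y k \<omega>) :: real)\<^sup>2) = (\<Sum>k=1..n. \<Sum>l=1..n. P k l)"
    using int by (simp add: product)
  also have "\<dots> = (\<Sum>k=1..n. p + (\<Sum>l\<in>{1..n}-{k}. P k l))"
  proof (rule sum.cong[OF refl])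
    fix k assume k: "k \<in> {1..n}"
    then have "(\<Sum>l=1..n. P k l) = P k k + (\<Sum>l\<in>{1..n}-{k}. P k l)" by (simp add: sum.remove)
    then show "(\<Sum>l=1..n. P k l) = p + (\<Sum>l\<in>{1..n}-{k}. P k l)" using marg[OF k] by (simp add: P_def)
  qed
  also have "\<dots> \<le> (\<Sum>k=1..n. p + (\<Sum>l\<in>{1..n}-{k}. p\<^sup>2 + b k l))"
    by (intro sum_mono add_left_mono) (auto intro!: pair simp: P_def)
  also have "\<dots> = real n * p + (\<Sum>k=1..n. real (n - 1) * p\<^sup>2) + (\<Sum>k\<in>{1..n}. \<Sum>l\<in>{1..n}-{k}. b k l)"
    by (simp add: sum.distrib card_Diff_singleton)
  also have "\<dots> \<le> real n * p + real n * real n * p\<^sup>2 + (\<Sum>k\<in>{1..n}. \<Sum>l\<in>{1..n}-{k}. b k l)"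
    using zero_le_power2[of p] by (simp add: algebra_simps of_nat_diff)
  finally show ?thesis .
qed

lemma (in prob_space) scaled_count_mse:
  fixes Y :: "nat \<Rightarrow> 'a \<Rightarrow> 'b" and A :: "'b set"
  assumes [measurable]: "\<And>k. Y k \<in> measurable M N" "A \<in> sets N"
    and marg: "\<And>k. k \<in> {1..n} \<Longrightarrow> prob {\<omega>\<in>space M. Y k \<omega> \<in> A} = p"
    and pair: "\<And>k l. k \<in> {1..n} \<Longrightarrow> l \<in> {1..n} \<Longrightarrow> k \<noteq> l \<Longrightarrow>
        prob {\<omega>\<in>space M. Y k \<omega> \<in> A \<and> Y l \<omega> \<in> A} \<le> p\<^sup>2 + b k l"
    and c: "0 \<le> c"
  shows "(\<integral>\<^sup>+ \<omega>. ennreal ((c * (\<Sum>k=1..n. indicator A (Y k \<omega>)) - v)\<^sup>2) \<partial>M)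
     \<le> ennreal ((c * real n * p - v)\<^sup>2 + c\<^sup>2 * real n * p + c\<^sup>2 * (\<Sum>k\<in>{1..n}. \<Sum>l\<in>{1..n}-{k}. b k l))"
proof -
  define S where "S \<omega> = (\<Sum>k=1..n. indicator A (Y k \<omega>) :: real)" for \<omega>
  have int_ind: "integrable M (\<lambda>\<omega>. indicator A (Y k \<omega>) :: real)" for k
    by (rule integrable_const_bound[where B=1]) (auto simp: indicator_def)
  have "0 \<le> S \<omega> \<and> S \<omega> \<le> real n" for \<omega>
    using sum_bounded_above[of "{1..n}" "\<lambda>k. indicator A (Y k \<omega>) :: real" 1]
    by (auto simp: S_def intro!: sum_nonneg)
  then have "integrable M (\<lambda>\<omega>. (S \<omega>)\<^sup>2)"
    by (intro integrable_const_bound[where B="(real n)\<^sup>2"]) (auto intro!: power_mono simp: S_def)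
  moreover have int_S: "integrable M S" unfolding S_def using int_ind by auto
  moreover have ES: "expectation S = real n * p"
  proof -
    have "expectation (\<lambda>\<omega>. indicator A (Y k \<omega>) :: real) = prob {\<omega>\<in>space M. Y k \<omega> \<in> A}" for k
      by (subst Bochner_Integration.integral_cong[where g="indicator {\<omega>\<in>space M. Y k \<omega> \<in> A}"])
         (auto simp: indicator_def)
    then show ?thesis unfolding S_def using int_ind marg by simp
  qed
  ultimately have "expectation (\<lambda>\<omega>. (c * S \<omega> - v)\<^sup>2)
      = c\<^sup>2 * expectation (\<lambda>\<omega>. (S \<omega>)\<^sup>2) - 2 * c * v * (real n * p) + v\<^sup>2"
    by (simp add: power2_eq_square algebra_simps prob_space)
  also have "\<dots> \<le> c\<^sup>2 * (real n * p + real n * real n * p\<^sup>2 + (\<Sum>k\<in>{1..n}. \<Sum>l\<in>{1..n}-{k}. b k l))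
                   - 2 * c * v * (real n * p) + v\<^sup>2"
    unfolding S_def
    by (intro add_right_mono diff_right_mono mult_left_mono count_second_moment[OF assms(1,2) marg pair]) auto
  also have "\<dots> = (c * real n * p - v)\<^sup>2 + c\<^sup>2 * real n * p + c\<^sup>2 * (\<Sum>k\<in>{1..n}. \<Sum>l\<in>{1..n}-{k}. b k l)"
    by (simp add: power2_eq_square algebra_simps)
  finally have le: "expectation (\<lambda>\<omega>. (c * S \<omega> - v)\<^sup>2) \<le> \<dots>" .
  have "integrable M (\<lambda>\<omega>. (c * S \<omega> - v)\<^sup>2)"
    using int_S \<open>integrable M (\<lambda>\<omega>. (S \<omega>)\<^sup>2)\<close> by (simp add: power2_eq_square algebra_simps)
  then have "(\<integral>\<^sup>+ \<omega>. ennreal ((c * S \<omega> - v)\<^sup>2) \<partial>M) = ennreal (expectation (\<lambda>\<omega>. (c * S \<omega> - v)\<^sup>2))"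
    by (rule nn_integral_eq_integral) simp
  then show ?thesis using le by (simp add: S_def ennreal_leI)
qed

section \<open>Elementary bounds on sums over lags\<close>

text \<open>Comparison of \<open>\<Sum> m\<^sup>-\<^sup>g\<close> with \<open>\<integral> x\<^sup>-\<^sup>g dx\<close>, via the mean value theorem.\<close>
lemma powr_le_antiderivative_increment:
  fixes g x :: real
  assumes g: "0 < g" "g \<noteq> 1" and x: "1 \<le> x"
  shows "(x + 1) powr (- g) \<le> ((x + 1) powr (1 - g) - x powr (1 - g)) / (1 - g)"
proof -
  have "\<exists>z>x. z < x + 1 \<and> (\<lambda>y. y powr (1 - g) / (1 - g)) (x + 1) - (\<lambda>y. y powr (1 - g) / (1 - g)) x
        = (x + 1 - x) * z powr (- g)"
  proof (rule MVT2)
    fix y assume "x \<le> y" "y \<le> x + 1"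
    then have y: "0 < y" using x by simp
    have "((\<lambda>y. y powr (1 - g) / (1 - g)) has_real_derivative (1 - g) * y powr (1 - g - 1) / (1 - g)) (at y)"
      by (intro DERIV_cdivide has_real_derivative_powr[OF y])
    then show "((\<lambda>y. y powr (1 - g) / (1 - g)) has_real_derivative y powr (- g)) (at y)"
      using g by simp
  qed simp
  then obtain z where z: "x < z" "z < x + 1"
    and eq: "(x + 1) powr (1 - g) / (1 - g) - x powr (1 - g) / (1 - g) = z powr (- g)"
    by auto
  have "(x + 1) powr (- g) \<le> z powr (- g)"
    by (rule powr_mono2') (use g x z in auto)
  also have "\<dots> = ((x + 1) powr (1 - g) - x powr (1 - g)) / (1 - g)" using eq by (simp add: diff_divide_distrib)
  finally show ?thesis .
qed

lemma powr_partial_sum_le: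
  fixes g :: real
  assumes g: "0 < g" "g \<noteq> 1" and N: "1 \<le> N"
  shows "(\<Sum>m=1..N. real m powr (- g)) \<le> 1 + (real N powr (1 - g) - 1) / (1 - g)"
  using N
proof (induction N rule: dec_induct)
  case base then show ?case by simp
next
  case (step N)
  have "(\<Sum>m=1..Suc N. real m powr (- g)) = (\<Sum>m=1..N. real m powr (- g)) + (real N + 1) powr (- g)"
    by (simp add: add.commute)
  also have "\<dots> \<le> 1 + (real N powr (1 - g) - 1) / (1 - g)
                  + ((real N + 1) powr (1 - g) - real N powr (1 - g)) / (1 - g)"
    using step.IH powr_le_antiderivative_increment[OF g, of "real N"] step.hyps by simp
  also have "\<dots> = 1 + (real (Suc N) powr (1 - g) - 1) / (1 - g)"
    by (simp add: diff_divide_distrib add_ac)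
  finally show ?case .
qed

text \<open>The weight \<open>\<Sum> m\<^sup>-\<^sup>\<gamma>\<close> of the short lags \<open>m\<delta> \<le> u\<close>; it governs how strongly the dependence
  at small lags inflates the variance, and its growth is what separates the three regimes.\<close>
definition short_lag_sum :: "real \<Rightarrow> real \<Rightarrow> real \<Rightarrow> nat \<Rightarrow> real" where
  "short_lag_sum g u \<delta> n = (\<Sum>m\<in>{m\<in>{1..n}. real m * \<delta> \<le> u}. real m powr (- g))"

lemma short_lag_sum_le_full_sum:
  assumes "0 < \<delta>"
  shows "short_lag_sum g u \<delta> n \<le> (\<Sum>m=1..nat \<lfloor>u / \<delta>\<rfloor>. real m powr (- g))"
  unfolding short_lag_sum_def
proof (rule sum_mono2)
  show "{m\<in>{1..n}. real m * \<delta> \<le> u} \<subseteq> {1..nat \<lfloor>u / \<delta>\<rfloor>}"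
    using assms by (auto simp: le_nat_floor le_divide_eq)
qed auto

lemma short_lag_sum_lt1:
  assumes d: "0 < \<delta>" and u: "0 < u" and g: "0 < g" "g < 1"
  shows "\<delta> powr (- g) * short_lag_sum g u \<delta> n \<le> u powr (1 - g) / (1 - g) / \<delta>"
proof -
  define N where "N = nat \<lfloor>u / \<delta>\<rfloor>"
  have "(\<Sum>m=1..N. real m powr (- g)) \<le> (u / \<delta>) powr (1 - g) / (1 - g)"
  proof (cases "1 \<le> N")
    case True
    have "(\<Sum>m=1..N. real m powr (- g)) \<le> 1 + (real N powr (1 - g) - 1) / (1 - g)"
      using powr_partial_sum_le[of g N] g True by simp
    also have "\<dots> \<le> real N powr (1 - g) / (1 - g)"
      using g by (simp add: field_simps)
    also have "\<dots> \<le> (u / \<delta>) powr (1 - g) / (1 - g)"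
      using g d u by (intro divide_right_mono powr_mono2) (auto simp: N_def)
    finally show ?thesis .
  qed (use g in \<open>simp add: not_le\<close>)
  then have "\<delta> powr (- g) * short_lag_sum g u \<delta> n \<le> \<delta> powr (- g) * ((u / \<delta>) powr (1 - g) / (1 - g))"
    using short_lag_sum_le_full_sum[OF d, of g u n] by (intro mult_left_mono) (simp_all add: N_def)
  also have "\<delta> powr (- g) * ((u / \<delta>) powr (1 - g) / (1 - g)) = u powr (1 - g) / (1 - g) / \<delta>"
  proof -
    have "\<delta> powr (- g) * (u / \<delta>) powr (1 - g) = u powr (1 - g) * (\<delta> powr (- g) / \<delta> powr (1 - g))"
      using d u by (simp add: powr_divide)
    also have "\<delta> powr (- g) / \<delta> powr (1 - g) = \<delta> powr (- 1)"
      by (simp add: powr_diff[symmetric])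
    also have "\<delta> powr (- 1) = 1 / \<delta>" using d by (simp add: powr_minus_divide)
    finally show ?thesis by simp
  qed
  finally show ?thesis .
qed

lemma short_lag_sum_eq1:
  assumes d: "0 < \<delta>" and u: "\<delta> \<le> u"
  shows "short_lag_sum 1 u \<delta> n \<le> 1 + ln (u / \<delta>)"
proof -
  define N where "N = nat \<lfloor>u / \<delta>\<rfloor>"
  have N1: "1 \<le> N" using d u by (simp add: N_def le_nat_floor le_divide_eq)
  have "(\<Sum>m=1..N. real m powr (- 1)) = harm N"
    by (simp add: harm_def powr_minus_divide inverse_eq_divide)
  also have "\<dots> \<le> 1 + ln (real N)"
    using euler_mascheroni_sequence_decreasing[of 1 N] N1 by (simp add: harm_def)
  also have "\<dots> \<le> 1 + ln (u / \<delta>)" using N1 d u by (simp add: N_def)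
  finally show ?thesis using short_lag_sum_le_full_sum[OF d, of 1 u n] by (simp add: N_def)
qed

lemma short_lag_sum_gt1:
  assumes d: "0 < \<delta>" and g: "1 < g"
  shows "short_lag_sum g u \<delta> n \<le> g / (g - 1)"
proof -
  define N where "N = nat \<lfloor>u / \<delta>\<rfloor>"
  have "(\<Sum>m=1..N. real m powr (- g)) \<le> g / (g - 1)"
  proof (cases "1 \<le> N")
    case True
    have "(\<Sum>m=1..N. real m powr (- g)) \<le> 1 + (real N powr (1 - g) - 1) / (1 - g)"
      using powr_partial_sum_le[of g N] g True by simp
    also have "\<dots> = 1 + (1 - real N powr (1 - g)) / (g - 1)"
      using g by (simp add: field_simps)
    also have "\<dots> \<le> 1 + 1 / (g - 1)"
      using g by (intro add_left_mono divide_right_mono) auto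
    also have "\<dots> = g / (g - 1)" using g by (simp add: field_simps)
    finally show ?thesis .
  qed (use g in \<open>simp add: not_le\<close>)
  then show ?thesis using short_lag_sum_le_full_sum[OF d, of g u n] by (simp add: N_def)
qed

lemma card_le_real_bound:
  fixes c :: real assumes "0 \<le> c"
  shows "real (card {m\<in>{1..n::nat}. real m \<le> c}) \<le> c"
proof -
  have "{m\<in>{1..n::nat}. real m \<le> c} \<subseteq> {1..nat \<lfloor>c\<rfloor>}"
    using assms by (auto simp: le_nat_floor)
  then have "card {m\<in>{1..n::nat}. real m \<le> c} \<le> card {1..nat \<lfloor>c\<rfloor>}" by (intro card_mono) auto
  then have "real (card {m\<in>{1..n::nat}. real m \<le> c}) \<le> real (nat \<lfloor>c\<rfloor>)" by simp
  also have "\<dots> \<le> c" using assms by linarith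
  finally show ?thesis .
qed

text \<open>The grid intervals \<open>[(m-1)\<delta>, m\<delta>)\<close> are disjoint, so a point lies in at most one of them.\<close>
lemma sum_indicator_grid_intervals_le1:
  fixes \<delta> s :: real assumes d: "0 < \<delta>" and S1: "\<And>m. m \<in> S \<Longrightarrow> 1 \<le> m"
  shows "(\<Sum>m\<in>S. indicator {(real m - 1) * \<delta> ..< real m * \<delta>} s) \<le> (1::ennreal)"
proof (cases "finite S")
  case True
  define S' where "S' = S \<inter> {m. s \<in> {(real m - 1) * \<delta> ..< real m * \<delta>}}"
  have eq: "(\<Sum>m\<in>S. indicator {(real m - 1) * \<delta> ..< real m * \<delta>} s) = (\<Sum>m\<in>S'. (1::ennreal))"
    using True by (simp add: S'_def indicator_def sum.If_cases)
  have "S' \<subseteq> {nat \<lfloor>s / \<delta>\<rfloor> + 1}"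
  proof
    fix m assume m: "m \<in> S'"
    then have "(real m - 1) * \<delta> \<le> s" "s < real m * \<delta>" by (auto simp: S'_def)
    then have "real m - 1 \<le> s / \<delta>" "s / \<delta> < real m" using d by (simp_all add: le_divide_eq divide_less_eq)
    then have "\<lfloor>s / \<delta>\<rfloor> = int m - 1" by (simp add: floor_eq_iff)
    moreover have "m \<ge> 1" using S1 m by (auto simp: S'_def)
    ultimately show "m \<in> {nat \<lfloor>s / \<delta>\<rfloor> + 1}" by simp
  qed
  then have "card S' \<le> 1" using card_mono[of "{nat \<lfloor>s / \<delta>\<rfloor> + 1}" S'] by simp
  then show ?thesis unfolding eq by simp
qed simp

lemma riemann_sum_le_tail_integral:
  fixes \<pi> :: "real \<Rightarrow> real" and \<delta> W :: real
  assumes d: "0 < \<delta>" and mono: "\<And>a b. W \<le> a \<Longrightarrow> a \<le> b \<Longrightarrow> \<pi> b \<le> \<pi> a"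
    and pos: "\<And>s. W \<le> s \<Longrightarrow> 0 \<le> \<pi> s"
    and int: "integrable lborel (\<lambda>s. indicator {W..} s * \<pi> s)"
  shows "\<delta> * (\<Sum>m\<in>{m\<in>{1..n::nat}. W + \<delta> < real m * \<delta>}. \<pi> (real m * \<delta>))
           \<le> (\<integral> s. indicator {W..} s * \<pi> s \<partial>lborel)"
proof -
  define G where "G s = indicator {W..} s * \<pi> s" for s
  have Gm[measurable]: "G \<in> borel_measurable borel"
    using borel_measurable_integrable[OF int] by (simp add: G_def[abs_def])
  have G0: "0 \<le> G s" for s using pos by (simp add: G_def indicator_def)
  define S where "S = {m\<in>{1..n::nat}. W + \<delta> < real m * \<delta>}"
  define I where "I m = {(real m - 1) * \<delta> ..< real m * \<delta>}" for m :: nat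
  have cell: "ennreal (\<delta> * \<pi> (real m * \<delta>)) \<le> (\<integral>\<^sup>+ s. ennreal (G s) * indicator (I m) s \<partial>lborel)"
    if m: "m \<in> S" for m
  proof -
    have W: "W \<le> (real m - 1) * \<delta>" using m by (simp add: S_def algebra_simps)
    have "ennreal (\<delta> * \<pi> (real m * \<delta>)) = (\<integral>\<^sup>+ s. ennreal (\<pi> (real m * \<delta>)) * indicator (I m) s \<partial>lborel)"
      using d W pos[of "real m * \<delta>"]
      by (simp add: I_def nn_integral_cmult_indicator ennreal_mult' algebra_simps mult.commute)
    also have "\<dots> \<le> (\<integral>\<^sup>+ s. ennreal (G s) * indicator (I m) s \<partial>lborel)"
      using W by (intro nn_integral_mono)
        (auto simp: I_def G_def indicator_def intro!: ennreal_leI mono)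
    finally show ?thesis .
  qed
  have "ennreal (\<delta> * (\<Sum>m\<in>S. \<pi> (real m * \<delta>))) = (\<Sum>m\<in>S. ennreal (\<delta> * \<pi> (real m * \<delta>)))"
    using d pos by (auto simp: S_def sum_distrib_left intro!: sum_ennreal[symmetric])
  also have "\<dots> \<le> (\<Sum>m\<in>S. \<integral>\<^sup>+ s. ennreal (G s) * indicator (I m) s \<partial>lborel)"
    by (rule sum_mono) (rule cell)
  also have "\<dots> = (\<integral>\<^sup>+ s. ennreal (G s) * (\<Sum>m\<in>S. indicator (I m) s) \<partial>lborel)"
    by (simp add: I_def nn_integral_sum[symmetric] sum_distrib_left)
  also have "\<dots> \<le> (\<integral>\<^sup>+ s. ennreal (G s) \<partial>lborel)"
    using mult_left_mono[OF sum_indicator_grid_intervals_le1[OF d], of S]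
    by (intro nn_integral_mono) (auto simp: I_def S_def)
  also have "\<dots> = ennreal (\<integral> s. G s \<partial>lborel)"
    by (rule nn_integral_eq_integral) (use int G0 in \<open>auto simp: G_def\<close>)
  finally have "ennreal (\<delta> * (\<Sum>m\<in>S. \<pi> (real m * \<delta>))) \<le> ennreal (\<integral> s. G s \<partial>lborel)" .
  moreover have "0 \<le> (\<integral> s. G s \<partial>lborel)" by (rule integral_nonneg_AE) (simp add: G0)
  ultimately show ?thesis by (simp add: S_def G_def)
qed

lemma sum_over_lag_pairs:
  fixes B :: "real \<Rightarrow> real" and \<delta> :: real
  assumes d: "0 < \<delta>" and B0: "\<And>m::nat. 1 \<le> m \<Longrightarrow> 0 \<le> B (real m * \<delta>)"
  shows "(\<Sum>k\<in>{1..n}. \<Sum>l\<in>{1..n}-{k}. B \<bar>real l * \<delta> - real k * \<delta>\<bar>)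
           \<le> 2 * real n * (\<Sum>m=1..n. B (real m * \<delta>))"
proof -
  have one_side: "(\<Sum>l\<in>{l\<in>{1..n}. P l}. B \<bar>real l * \<delta> - real k * \<delta>\<bar>) \<le> (\<Sum>m=1..n. B (real m * \<delta>))"
    if k: "k \<in> {1..n}" and P: "\<And>l. P l \<Longrightarrow> l \<noteq> k" "(\<forall>l. P l \<longrightarrow> l < k) \<or> (\<forall>l. P l \<longrightarrow> k < l)"
    for k P
  proof -
    define lag where "lag l = (if l < k then k - l else l - k)" for l
    have "(\<Sum>l\<in>{l\<in>{1..n}. P l}. B \<bar>real l * \<delta> - real k * \<delta>\<bar>) = (\<Sum>l\<in>{l\<in>{1..n}. P l}. B (real (lag l) * \<delta>))"
      using d by (intro sum.cong) (auto simp: lag_def of_nat_diff left_diff_distrib abs_if)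
    also have "\<dots> = (\<Sum>m\<in>lag ` {l\<in>{1..n}. P l}. B (real m * \<delta>))"
      using P(2) by (intro sum.reindex[symmetric, unfolded comp_def]) (auto simp: inj_on_def lag_def)
    also have "\<dots> \<le> (\<Sum>m=1..n. B (real m * \<delta>))"
      using k by (intro sum_mono2) (auto simp: lag_def intro!: B0 dest!: P(1))
    finally show ?thesis .
  qed
  have "(\<Sum>l\<in>{1..n}-{k}. B \<bar>real l * \<delta> - real k * \<delta>\<bar>) \<le> 2 * (\<Sum>m=1..n. B (real m * \<delta>))"
    if k: "k \<in> {1..n}" for k
  proof -
    have split: "{1..n}-{k} = {l\<in>{1..n}. l < k} \<union> {l\<in>{1..n}. k < l}" by auto
    have "(\<Sum>l\<in>{1..n}-{k}. B \<bar>real l * \<delta> - real k * \<delta>\<bar>)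
        = (\<Sum>l\<in>{l\<in>{1..n}. l < k}. B \<bar>real l * \<delta> - real k * \<delta>\<bar>)
          + (\<Sum>l\<in>{l\<in>{1..n}. k < l}. B \<bar>real l * \<delta> - real k * \<delta>\<bar>)"
      unfolding split by (rule sum.union_disjoint) auto
    also have "\<dots> \<le> (\<Sum>m=1..n. B (real m * \<delta>)) + (\<Sum>m=1..n. B (real m * \<delta>))"
      by (intro add_mono one_side[OF k]) auto
    finally show ?thesis by simp
  qed
  then have "(\<Sum>k\<in>{1..n}. \<Sum>l\<in>{1..n}-{k}. B \<bar>real l * \<delta> - real k * \<delta>\<bar>)
      \<le> (\<Sum>k\<in>{1..n}. 2 * (\<Sum>m=1..n. B (real m * \<delta>)))"
    by (rule sum_mono)
  then show ?thesis by simp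
qed

section \<open>The integrated squared bias of the histogram\<close>

lemma nn_integral_on_set_square_le:
  fixes u :: "'a \<Rightarrow> real"
  assumes [measurable]: "u \<in> borel_measurable M" "A \<in> sets M"
  shows "(\<integral>\<^sup>+ x. ennreal \<bar>u x\<bar> * indicator A x \<partial>M)\<^sup>2
           \<le> emeasure M A * (\<integral>\<^sup>+ x. ennreal ((u x)\<^sup>2) * indicator A x \<partial>M)"
proof -
  have "(\<integral>\<^sup>+ x. (ennreal \<bar>u x\<bar> * indicator A x) * indicator A x \<partial>M)\<^sup>2
      \<le> (\<integral>\<^sup>+ x. (ennreal \<bar>u x\<bar> * indicator A x)\<^sup>2 \<partial>M) * (\<integral>\<^sup>+ x. (indicator A x)\<^sup>2 \<partial>M)"
    by (rule Cauchy_Schwarz_nn_integral) measurable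
  also have "(\<integral>\<^sup>+ x. (ennreal \<bar>u x\<bar> * indicator A x)\<^sup>2 \<partial>M) = (\<integral>\<^sup>+ x. ennreal ((u x)\<^sup>2) * indicator A x \<partial>M)"
    by (intro nn_integral_cong) (simp add: indicator_def ennreal_power)
  also have "(\<integral>\<^sup>+ x. (indicator A x)\<^sup>2 \<partial>M) = (\<integral>\<^sup>+ x. indicator A x \<partial>M)"
    by (intro nn_integral_cong) (simp add: indicator_def)
  also have "(\<integral>\<^sup>+ x. (ennreal \<bar>u x\<bar> * indicator A x) * indicator A x \<partial>M)
      = (\<integral>\<^sup>+ x. ennreal \<bar>u x\<bar> * indicator A x \<partial>M)"
    by (intro nn_integral_cong) (simp add: indicator_def)
  finally show ?thesis by (simp add: mult.commute)
qed

lemma segment_has_vector_derivative: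
  fixes f :: "real ^ 'd::finite \<Rightarrow> real" and Df :: "'d \<Rightarrow> real ^ 'd \<Rightarrow> real"
  assumes deriv: "\<And>x. (f has_derivative (\<lambda>v. \<Sum>i\<in>UNIV. Df i x * v $ i)) (at x)"
  shows "((\<lambda>s. f (x + s *\<^sub>R (y - x))) has_vector_derivative
           (\<Sum>i\<in>UNIV. Df i (x + s *\<^sub>R (y - x)) * (y $ i - x $ i))) (at s within S)"
proof -
  have "((\<lambda>s. x + s *\<^sub>R (y - x)) has_derivative (\<lambda>s. s *\<^sub>R (y - x))) (at s within S)"
    by (auto intro!: derivative_eq_intros)
  from has_derivative_compose[OF this deriv]
  have "((\<lambda>s. f (x + s *\<^sub>R (y - x))) has_derivative
          (\<lambda>v. \<Sum>i\<in>UNIV. Df i (x + s *\<^sub>R (y - x)) * (v *\<^sub>R (y - x)) $ i)) (at s within S)"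
    by (simp add: o_def)
  moreover have "(\<lambda>v. \<Sum>i\<in>UNIV. Df i (x + s *\<^sub>R (y - x)) * (v *\<^sub>R (y - x)) $ i)
      = (\<lambda>v. v *\<^sub>R (\<Sum>i\<in>UNIV. Df i (x + s *\<^sub>R (y - x)) * (y $ i - x $ i)))"
    by (auto simp: sum_distrib_left algebra_simps)
  ultimately show ?thesis by (simp add: has_vector_derivative_def)
qed

text \<open>Squared increment of \<open>f\<close> along the segment from \<open>x\<close> to \<open>y\<close>: by the fundamental theorem of calculus
  and Cauchy--Schwarz it is at most \<open>|y - x|\<^sup>2 \<int>\<^sub>0\<^sup>1 |\<nabla>f(x + s(y - x))|\<^sup>2 ds\<close>.\<close>
lemma sq_increment_le_gradient_integral:
  fixes f :: "real ^ 'd::finite \<Rightarrow> real" and Df :: "'d \<Rightarrow> real ^ 'd \<Rightarrow> real"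
  assumes deriv: "\<And>x. (f has_derivative (\<lambda>v. \<Sum>i\<in>UNIV. Df i x * v $ i)) (at x)"
    and cont: "\<And>i. continuous_on UNIV (Df i)"
  shows "ennreal ((f y - f x)\<^sup>2) \<le> ennreal (\<Sum>i\<in>UNIV. (y $ i - x $ i)\<^sup>2) *
     (\<integral>\<^sup>+ s. ennreal (\<Sum>i\<in>UNIV. (Df i (x + s *\<^sub>R (y - x)))\<^sup>2) * indicator {0..1} s \<partial>lborel)"
proof -
  define g' where "g' s = (\<Sum>i\<in>UNIV. Df i (x + s *\<^sub>R (y - x)) * (y $ i - x $ i))" for s
  define G where "G s = (\<Sum>i\<in>UNIV. (Df i (x + s *\<^sub>R (y - x)))\<^sup>2)" for s
  define Q where "Q = (\<Sum>i\<in>UNIV. (y $ i - x $ i)\<^sup>2)"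
  have ci: "continuous_on UNIV (\<lambda>s. Df i (x + s *\<^sub>R (y - x)))" for i
    by (rule continuous_on_compose2[OF cont[of i]]) (intro continuous_intros, auto)
  have contg: "continuous_on UNIV g'" unfolding g'_def by (intro continuous_intros ci)
  have contG: "continuous_on UNIV G" unfolding G_def by (intro continuous_intros ci)
  have [measurable]: "g' \<in> borel_measurable borel" "G \<in> borel_measurable borel"
    using contg contG by (simp_all add: borel_measurable_continuous_onI)
  have FTC: "(g' has_integral (f y - f x)) {0..1}"
    using fundamental_theorem_of_calculus[of 0 1 "\<lambda>s. f (x + s *\<^sub>R (y - x))" g']
      segment_has_vector_derivative[OF deriv] by (simp add: g'_def)
  have abs_integrable: "(\<lambda>s. \<bar>g' s\<bar>) integrable_on {0..1}"
    by (rule integrable_continuous_interval) (intro continuous_intros continuous_on_subset[OF contg], auto)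
  then have abs_int: "((\<lambda>s. \<bar>g' s\<bar>) has_integral integral {0..1} (\<lambda>s. \<bar>g' s\<bar>)) {0..1}"
    by blast
  have "\<bar>f y - f x\<bar> = \<bar>integral {0..1} g'\<bar>" using FTC by (simp add: integral_unique)
  also have "\<dots> \<le> integral {0..1} (\<lambda>s. \<bar>g' s\<bar>)"
    using integral_norm_bound_integral[OF has_integral_integrable[OF FTC] abs_integrable] by simp
  finally have "\<bar>f y - f x\<bar> \<le> integral {0..1} (\<lambda>s. \<bar>g' s\<bar>)" .
  then have "(ennreal \<bar>f y - f x\<bar>)\<^sup>2 \<le> (ennreal (integral {0..1} (\<lambda>s. \<bar>g' s\<bar>)))\<^sup>2"
    by (intro power_mono ennreal_leI) auto
  then have "ennreal ((f y - f x)\<^sup>2) \<le> (ennreal (integral {0..1} (\<lambda>s. \<bar>g' s\<bar>)))\<^sup>2"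
    by (simp add: ennreal_power)
  also have "\<dots> = (\<integral>\<^sup>+ s. ennreal \<bar>g' s\<bar> * indicator {0..1} s \<partial>lborel)\<^sup>2"
    using nn_integral_has_integral_lebesgue'[OF _ abs_int] by simp
  also have "\<dots> \<le> (\<integral>\<^sup>+ s. ennreal ((g' s)\<^sup>2) * indicator {0..1} s \<partial>lborel)"
    using nn_integral_on_set_square_le[of g' lborel "{0..1}"] by simp
  also have "\<dots> \<le> (\<integral>\<^sup>+ s. ennreal Q * (ennreal (G s) * indicator {0..1} s) \<partial>lborel)"
  proof (intro nn_integral_mono)
    fix s
    have "(g' s)\<^sup>2 \<le> G s * Q"
      unfolding g'_def G_def Q_def by (rule Cauchy_Schwarz_ineq_sum)
    moreover have "0 \<le> Q" by (simp add: Q_def sum_nonneg)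
    ultimately have "ennreal ((g' s)\<^sup>2) \<le> ennreal Q * ennreal (G s)"
      by (simp add: ennreal_mult'[symmetric] mult.commute ennreal_leI)
    then show "ennreal ((g' s)\<^sup>2) * indicator {0..1} s \<le> ennreal Q * (ennreal (G s) * indicator {0..1} s)"
      by (simp add: indicator_def)
  qed
  also have "\<dots> = ennreal Q * (\<integral>\<^sup>+ s. ennreal (G s) * indicator {0..1} s \<partial>lborel)"
    by (rule nn_integral_cmult) measurable
  finally show ?thesis by (simp add: Q_def G_def)
qed

lemma average_deviation_sq_le:
  fixes f :: "real ^ 'd::finite \<Rightarrow> real" and A :: "(real ^ 'd) set"
  assumes fi: "integrable lborel f" and [measurable]: "A \<in> sets borel"
    and EA: "emeasure lborel A = ennreal V" and V: "0 < V"
  shows "ennreal (((\<integral> y. f y * indicator A y \<partial>lborel) / V - f x)\<^sup>2)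
     \<le> ennreal (1 / V) * (\<integral>\<^sup>+ y. ennreal ((f y - f x)\<^sup>2) * indicator A y \<partial>lborel)"
proof -
  have [measurable]: "f \<in> borel_measurable borel" using fi by (simp add: borel_measurable_integrable)
  have iA: "integrable lborel (\<lambda>y. f x * indicator A y :: real)"
    using EA by (intro integrable_mult_right integrable_real_indicator) auto
  have iAf: "integrable lborel (\<lambda>y. f y * indicator A y)"
    using integrable_mult_indicator[OF _ fi, of A] by (simp add: mult.commute)
  have idiff: "integrable lborel (\<lambda>y. (f y - f x) * indicator A y)"
    using Bochner_Integration.integrable_diff[OF iAf iA] by (simp add: left_diff_distrib)
  define a where "a = (\<integral> y. (f y - f x) * indicator A y \<partial>lborel)"
  have "a = (\<integral> y. f y * indicator A y \<partial>lborel) - f x * V"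
    using Bochner_Integration.integral_diff[OF iAf iA] EA V
    by (simp add: a_def left_diff_distrib measure_def)
  then have avg: "(\<integral> y. f y * indicator A y \<partial>lborel) / V - f x = a / V"
    using V by (simp add: field_simps)
  have "\<bar>a\<bar> \<le> (\<integral> y. \<bar>(f y - f x) * indicator A y\<bar> \<partial>lborel)"
    unfolding a_def by (rule integral_abs_bound)
  moreover have "ennreal (\<integral> y. \<bar>(f y - f x) * indicator A y\<bar> \<partial>lborel)
      = (\<integral>\<^sup>+ y. ennreal \<bar>f y - f x\<bar> * indicator A y \<partial>lborel)"
    using integrable_abs[OF idiff]
    by (subst nn_integral_eq_integral[symmetric]) (auto intro!: nn_integral_cong simp: indicator_def)
  ultimately have "(ennreal \<bar>a\<bar>)\<^sup>2 \<le> (\<integral>\<^sup>+ y. ennreal \<bar>f y - f x\<bar> * indicator A y \<partial>lborel)\<^sup>2"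
    by (metis abs_ge_zero ennreal_leI power_mono zero_le)
  then have "ennreal (a\<^sup>2) \<le> (\<integral>\<^sup>+ y. ennreal \<bar>f y - f x\<bar> * indicator A y \<partial>lborel)\<^sup>2"
    by (simp add: ennreal_power)
  also have "\<dots> \<le> ennreal V * (\<integral>\<^sup>+ y. ennreal ((f y - f x)\<^sup>2) * indicator A y \<partial>lborel)"
    using nn_integral_on_set_square_le[of "\<lambda>y. f y - f x" lborel A] EA by simp
  finally have a2: "ennreal (a\<^sup>2) \<le> ennreal V * (\<integral>\<^sup>+ y. ennreal ((f y - f x)\<^sup>2) * indicator A y \<partial>lborel)" .
  have "ennreal ((a / V)\<^sup>2) = ennreal (a\<^sup>2) * ennreal (1 / V\<^sup>2)"
    using V by (simp add: ennreal_mult'[symmetric] power_divide)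
  also have "\<dots> \<le> ennreal V * (\<integral>\<^sup>+ y. ennreal ((f y - f x)\<^sup>2) * indicator A y \<partial>lborel) * ennreal (1 / V\<^sup>2)"
    by (intro mult_right_mono a2) simp
  also have "\<dots> = (ennreal V * ennreal (1 / V\<^sup>2)) * (\<integral>\<^sup>+ y. ennreal ((f y - f x)\<^sup>2) * indicator A y \<partial>lborel)"
    by (simp add: mult_ac)
  also have "ennreal V * ennreal (1 / V\<^sup>2) = ennreal (1 / V)"
    using V by (simp add: ennreal_mult'[symmetric] power2_eq_square)
  finally show ?thesis by (simp add: avg)
qed

lemma nn_integral_affine_scaling:
  fixes g :: "real ^ 'd::finite \<Rightarrow> ennreal" and t :: real
  assumes [measurable]: "g \<in> borel_measurable borel" and t: "0 < t"
  shows "(\<integral>\<^sup>+ y. g (a + t *\<^sub>R y) \<partial>lborel) = ennreal (1 / t ^ CARD('d)) * (\<integral>\<^sup>+ y. g y \<partial>lborel)"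
proof -
  have "(\<integral>\<^sup>+ y. g y \<partial>lborel) = ennreal (t ^ CARD('d)) * (\<integral>\<^sup>+ y. g (a + t *\<^sub>R y) \<partial>lborel)"
    using t by (subst lborel_affine[of t a]) (simp_all add: nn_integral_density nn_integral_distr nn_integral_cmult)
  then have "ennreal (1 / t ^ CARD('d)) * (\<integral>\<^sup>+ y. g y \<partial>lborel)
      = (ennreal (1 / t ^ CARD('d)) * ennreal (t ^ CARD('d))) * (\<integral>\<^sup>+ y. g (a + t *\<^sub>R y) \<partial>lborel)"
    by (simp add: mult.assoc)
  also have "ennreal (1 / t ^ CARD('d)) * ennreal (t ^ CARD('d)) = 1"
    using t by (simp add: ennreal_mult'[symmetric])
  finally show ?thesis by simp
qed

lemma hcube_segment:
  fixes x y :: "real ^ 'd::finite"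
  assumes "x \<in> hcube h j" "y \<in> hcube h j" "0 \<le> s" "s \<le> 1"
  shows "x + s *\<^sub>R (y - x) \<in> hcube h j"
proof -
  have "x + s *\<^sub>R (y - x) = (1 - s) *\<^sub>R x + s *\<^sub>R y" by (simp add: algebra_simps)
  moreover have "(1 - s) *\<^sub>R x + s *\<^sub>R y \<in> hcube h j"
    unfolding hcube_def
  proof (clarify)
    fix i
    define lo hi where "lo = real_of_int (j $ i) * h" and "hi = (real_of_int (j $ i) + 1) * h"
    have x: "lo \<le> x $ i" "x $ i < hi" and y: "lo \<le> y $ i" "y $ i < hi"
      using assms(1,2) by (auto simp: hcube_def lo_def hi_def)
    have "(1 - s) * lo + s * lo \<le> (1 - s) * x $ i + s * y $ i"
      using x y assms by (intro add_mono mult_left_mono) auto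
    moreover have "(1 - s) * x $ i + s * y $ i < (1 - s) * hi + s * hi"
    proof (cases "s = 1")
      case False
      then have "0 < 1 - s" using assms by simp
      then show ?thesis using x y assms by (intro add_less_le_mono mult_strict_left_mono mult_left_mono) auto
    qed (use y in simp)
    ultimately show "real_of_int (j $ i) * h \<le> ((1 - s) *\<^sub>R x + s *\<^sub>R y) $ i \<and>
         ((1 - s) *\<^sub>R x + s *\<^sub>R y) $ i < (real_of_int (j $ i) + 1) * h"
      by (simp add: lo_def hi_def algebra_simps)
  qed
  ultimately show ?thesis by simp
qed

lemma cell_nn_integral_measurable:
  fixes G :: "real ^ 'd::finite \<Rightarrow> ennreal"
  assumes h: "0 < h" and [measurable]: "G \<in> borel_measurable borel"
  shows "(\<lambda>x. \<integral>\<^sup>+ z. indicator (hcube h (cell_index h x)) z * G z \<partial>lborel) \<in> borel_measurable lborel"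
proof -
  have "(\<lambda>p. (if cell_index h (snd p) = cell_index h (fst p) then 1 else 0) * G (snd p))
          \<in> borel_measurable (lborel \<Otimes>\<^sub>M lborel)"
    by measurable
  from lborel.borel_measurable_nn_integral_fst[OF this] show ?thesis
    by (simp add: indicator_cell[OF h])
qed

text \<open>Integrating \<open>G\<close> at the point dividing the segment from \<open>x\<close> to a point \<open>y\<close> of its cell in
  ratio \<open>s\<close>: the substitution \<open>y \<mapsto> x + s(y - x)\<close> stays inside the cell by convexity.\<close>
lemma cell_segment_integral_le:
  fixes G :: "real ^ 'd::finite \<Rightarrow> ennreal"
  assumes [measurable]: "G \<in> borel_measurable borel" and h: "0 < h" and s: "0 < s" "s \<le> 1"
  shows "(\<integral>\<^sup>+ x. \<integral>\<^sup>+ y. indicator (hcube h (cell_index h x)) y * G (x + s *\<^sub>R (y - x)) \<partial>lborel \<partial>lborel)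
     \<le> ennreal (1 / s ^ CARD('d)) * (ennreal (h ^ CARD('d)) * (\<integral>\<^sup>+ z. G z \<partial>lborel))"
proof -
  have "(\<integral>\<^sup>+ x. \<integral>\<^sup>+ y. indicator (hcube h (cell_index h x)) y * G (x + s *\<^sub>R (y - x)) \<partial>lborel \<partial>lborel)
     \<le> (\<integral>\<^sup>+ x. \<integral>\<^sup>+ y. (\<lambda>z. indicator (hcube h (cell_index h x)) z * G z) ((x - s *\<^sub>R x) + s *\<^sub>R y)
           \<partial>lborel \<partial>lborel)"
  proof (intro nn_integral_mono)
    fix x y :: "real ^ 'd"
    have x: "x \<in> hcube h (cell_index h x)" by (simp add: mem_hcube_iff[OF h])
    have e: "x + s *\<^sub>R (y - x) = (x - s *\<^sub>R x) + s *\<^sub>R y" by (simp add: algebra_simps)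
    show "indicator (hcube h (cell_index h x)) y * G (x + s *\<^sub>R (y - x))
        \<le> indicator (hcube h (cell_index h x)) ((x - s *\<^sub>R x) + s *\<^sub>R y) * G ((x - s *\<^sub>R x) + s *\<^sub>R y)"
      using hcube_segment[OF x, of y s] s unfolding e[symmetric] by (auto simp: indicator_def)
  qed
  also have "\<dots> = (\<integral>\<^sup>+ x. ennreal (1 / s ^ CARD('d)) *
                     (\<integral>\<^sup>+ z. indicator (hcube h (cell_index h x)) z * G z \<partial>lborel) \<partial>lborel)"
    using s by (intro nn_integral_cong nn_integral_affine_scaling) measurable
  also have "\<dots> = ennreal (1 / s ^ CARD('d)) *
                     (\<integral>\<^sup>+ x. \<integral>\<^sup>+ z. indicator (hcube h (cell_index h x)) z * G z \<partial>lborel \<partial>lborel)"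
    by (rule nn_integral_cmult[OF cell_nn_integral_measurable[OF h]]) measurable
  also have "\<dots> = ennreal (1 / s ^ CARD('d)) * (ennreal (h ^ CARD('d)) * (\<integral>\<^sup>+ z. G z \<partial>lborel))"
    by (subst nn_integral_cell_partition[OF h]) auto
  finally show ?thesis .
qed

text \<open>The same with the factor \<open>s\<^sup>-\<^sup>d\<close> replaced by \<open>2\<^sup>d\<close>, uniformly in \<open>s \<in> [0,1]\<close>: for \<open>s < 1/2\<close>
  exchange the roles of \<open>x\<close> and \<open>y\<close> (which lie in the same cell) and use the ratio \<open>1 - s\<close>.\<close>
lemma cell_segment_integral_uniform:
  fixes G :: "real ^ 'd::finite \<Rightarrow> ennreal"
  assumes [measurable]: "G \<in> borel_measurable borel" and h: "0 < h" and s: "0 \<le> s" "s \<le> 1"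
  shows "(\<integral>\<^sup>+ x. \<integral>\<^sup>+ y. indicator (hcube h (cell_index h x)) y * G (x + s *\<^sub>R (y - x)) \<partial>lborel \<partial>lborel)
     \<le> ennreal (2 ^ CARD('d)) * (ennreal (h ^ CARD('d)) * (\<integral>\<^sup>+ z. G z \<partial>lborel))"
proof -
  have factor: "ennreal (1 / t ^ CARD('d)) \<le> ennreal (2 ^ CARD('d))" if "1/2 \<le> t" for t :: real
  proof (intro ennreal_leI)
    have "(1/2::real) ^ CARD('d) \<le> t ^ CARD('d)" using that by (intro power_mono) auto
    then have "1 / t ^ CARD('d) \<le> 1 / (1/2::real) ^ CARD('d)" using that by (intro divide_left_mono) auto
    then show "1 / t ^ CARD('d) \<le> 2 ^ CARD('d)" by (simp add: power_one_over)
  qed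
  show ?thesis
  proof (cases "1/2 \<le> s")
    case True
    then show ?thesis
      using cell_segment_integral_le[of G h s] s h order_trans[OF _ mult_right_mono[OF factor]] by simp
  next
    case False
    have "(\<integral>\<^sup>+ x. \<integral>\<^sup>+ y. indicator (hcube h (cell_index h x)) y * G (x + s *\<^sub>R (y - x)) \<partial>lborel \<partial>lborel)
       = (\<integral>\<^sup>+ x. \<integral>\<^sup>+ y. (if cell_index h y = cell_index h x then 1 else 0) * G (x + s *\<^sub>R (y - x))
             \<partial>lborel \<partial>lborel)"
      by (simp add: indicator_cell[OF h])
    also have "\<dots> = (\<integral>\<^sup>+ y. \<integral>\<^sup>+ x. (if cell_index h y = cell_index h x then 1 else 0) * G (x + s *\<^sub>R (y - x))
             \<partial>lborel \<partial>lborel)"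
      by (rule lborel_pair.Fubini'[symmetric]) measurable
    also have "\<dots> = (\<integral>\<^sup>+ y. \<integral>\<^sup>+ x. indicator (hcube h (cell_index h y)) x * G (y + (1 - s) *\<^sub>R (x - y))
             \<partial>lborel \<partial>lborel)"
      by (simp add: indicator_cell[OF h] eq_commute algebra_simps)
    also have "\<dots> \<le> ennreal (1 / (1 - s) ^ CARD('d)) * (ennreal (h ^ CARD('d)) * (\<integral>\<^sup>+ z. G z \<partial>lborel))"
      using False s by (intro cell_segment_integral_le h) auto
    also have "\<dots> \<le> ennreal (2 ^ CARD('d)) * (ennreal (h ^ CARD('d)) * (\<integral>\<^sup>+ z. G z \<partial>lborel))"
      using False by (intro mult_right_mono factor) auto
    finally show ?thesis .
  qed
qed

lemma sum_sq_diff_in_cell: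
  fixes x y :: "real ^ 'd::finite"
  assumes h: "0 < h" and y: "y \<in> hcube h (cell_index h x)"
  shows "(\<Sum>i\<in>UNIV. (y $ i - x $ i)\<^sup>2) \<le> real CARD('d) * h\<^sup>2"
proof -
  have x: "x \<in> hcube h (cell_index h x)" by (simp add: mem_hcube_iff[OF h])
  have "\<bar>y $ i - x $ i\<bar> \<le> h" for i
  proof -
    have "h * real_of_int (cell_index h x $ i) \<le> x $ i \<and> x $ i < h + h * real_of_int (cell_index h x $ i)"
         "h * real_of_int (cell_index h x $ i) \<le> y $ i \<and> y $ i < h + h * real_of_int (cell_index h x $ i)"
      using x y by (auto simp: hcube_def algebra_simps)
    then show ?thesis by (simp add: abs_le_iff)
  qed
  then have "(y $ i - x $ i)\<^sup>2 \<le> h\<^sup>2" for i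
    by (metis abs_ge_zero power2_abs power_mono)
  then have "(\<Sum>i\<in>UNIV. (y $ i - x $ i)\<^sup>2) \<le> (\<Sum>i\<in>(UNIV::'d set). h\<^sup>2)" by (intro sum_mono)
  then show ?thesis by simp
qed

text \<open>Pointwise squared bias: Jensen on the cell of \<open>x\<close>, then the gradient bound along segments.\<close>
lemma cell_bias_sq_le:
  fixes f :: "real ^ 'd::finite \<Rightarrow> real" and Df :: "'d \<Rightarrow> real ^ 'd \<Rightarrow> real"
  assumes fi: "integrable lborel f"
    and deriv: "\<And>x. (f has_derivative (\<lambda>v. \<Sum>i\<in>UNIV. Df i x * v $ i)) (at x)"
    and cont: "\<And>i. continuous_on UNIV (Df i)"
    and h: "0 < h"
  shows "ennreal (((\<integral> y. f y * indicator (hcube h (cell_index h x)) y \<partial>lborel) / h ^ CARD('d) - f x)\<^sup>2)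
     \<le> ennreal (1 / h ^ CARD('d)) * ennreal (real CARD('d) * h\<^sup>2) *
        (\<integral>\<^sup>+ y. \<integral>\<^sup>+ s. indicator (hcube h (cell_index h x)) y *
            (ennreal (\<Sum>i\<in>UNIV. (Df i (x + s *\<^sub>R (y - x)))\<^sup>2) * indicator {0..1} s) \<partial>lborel \<partial>lborel)"
proof -
  define A where "A = hcube h (cell_index h x)"
  define I where "I y = (\<integral>\<^sup>+ s. ennreal (\<Sum>i\<in>UNIV. (Df i (x + s *\<^sub>R (y - x)))\<^sup>2) * indicator {0..1} s \<partial>lborel)"
    for y
  have Gm[measurable]: "(\<lambda>z. \<Sum>i\<in>UNIV. (Df i z)\<^sup>2) \<in> borel_measurable borel"
    by (intro borel_measurable_continuous_onI continuous_intros cont)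
  have "ennreal (((\<integral> y. f y * indicator A y \<partial>lborel) / h ^ CARD('d) - f x)\<^sup>2)
      \<le> ennreal (1 / h ^ CARD('d)) * (\<integral>\<^sup>+ y. ennreal ((f y - f x)\<^sup>2) * indicator A y \<partial>lborel)"
    using h by (intro average_deviation_sq_le[OF fi]) (auto simp: A_def emeasure_hcube)
  also have "(\<integral>\<^sup>+ y. ennreal ((f y - f x)\<^sup>2) * indicator A y \<partial>lborel)
      \<le> (\<integral>\<^sup>+ y. ennreal (real CARD('d) * h\<^sup>2) * (indicator A y * I y) \<partial>lborel)"
  proof (intro nn_integral_mono)
    fix y
    show "ennreal ((f y - f x)\<^sup>2) * indicator A y \<le> ennreal (real CARD('d) * h\<^sup>2) * (indicator A y * I y)"
    proof (cases "y \<in> A")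
      case True
      have "ennreal ((f y - f x)\<^sup>2) \<le> ennreal (\<Sum>i\<in>UNIV. (y $ i - x $ i)\<^sup>2) * I y"
        unfolding I_def by (rule sq_increment_le_gradient_integral[OF deriv cont])
      also have "\<dots> \<le> ennreal (real CARD('d) * h\<^sup>2) * I y"
        using True unfolding A_def by (intro mult_right_mono ennreal_leI sum_sq_diff_in_cell[OF h]) auto
      finally show ?thesis using True by simp
    qed simp
  qed
  also have "\<dots> = ennreal (real CARD('d) * h\<^sup>2) * (\<integral>\<^sup>+ y. indicator A y * I y \<partial>lborel)"
    by (rule nn_integral_cmult) (unfold I_def A_def indicator_cell[OF h], measurable)
  finally show ?thesis
    by (simp add: A_def I_def mult.assoc nn_integral_cmult[symmetric] mult_left_mono)
qed

text \<open>Integrating the pointwise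
  bound, Fubini brings the segment parameter \<open>s\<close> outside, and each \<open>s\<close>-slice is controlled by
  \<open>cell_segment_integral_uniform\<close>.\<close>
lemma histogram_bias_le:
  fixes f :: "real ^ 'd::finite \<Rightarrow> real" and Df :: "'d \<Rightarrow> real ^ 'd \<Rightarrow> real"
  assumes fi: "integrable lborel f"
    and deriv: "\<And>x. (f has_derivative (\<lambda>v. \<Sum>i\<in>UNIV. Df i x * v $ i)) (at x)"
    and cont: "\<And>i. continuous_on UNIV (Df i)"
    and h: "0 < h"
  shows "(\<integral>\<^sup>+ x. ennreal ((cell_mass f h x / h ^ CARD('d) - f x)\<^sup>2) \<partial>lborel)
     \<le> ennreal (real CARD('d) * h\<^sup>2) * ennreal (2 ^ CARD('d)) *
          (\<integral>\<^sup>+ z. ennreal (\<Sum>i\<in>UNIV. (Df i z)\<^sup>2) \<partial>lborel)"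
proof -
  define Gr where "Gr z = ennreal (\<Sum>i\<in>UNIV. (Df i z)\<^sup>2)" for z
  have [measurable]: "Gr \<in> borel_measurable borel"
    unfolding Gr_def by (intro measurable_compose[OF _ measurable_ennreal]
        borel_measurable_continuous_onI continuous_intros cont)
  define F where "F x y s = indicator (hcube h (cell_index h x)) y * (Gr (x + s *\<^sub>R (y - x)) * indicator {0..1::real} s)"
    for x y :: "real ^ 'd" and s
  define c where "c = ennreal (1 / h ^ CARD('d)) * ennreal (real CARD('d) * h\<^sup>2)"
  have "(\<integral>\<^sup>+ x. ennreal (((\<integral> y. f y * indicator (hcube h (cell_index h x)) y \<partial>lborel) / h ^ CARD('d)
                            - f x)\<^sup>2) \<partial>lborel)
     \<le> (\<integral>\<^sup>+ x. c * (\<integral>\<^sup>+ y. \<integral>\<^sup>+ s. F x y s \<partial>lborel \<partial>lborel) \<partial>lborel)"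
    using cell_bias_sq_le[OF fi deriv cont h] by (intro nn_integral_mono) (simp add: c_def F_def Gr_def cell_mass_def)
  also have "\<dots> = c * (\<integral>\<^sup>+ x. \<integral>\<^sup>+ y. \<integral>\<^sup>+ s. F x y s \<partial>lborel \<partial>lborel \<partial>lborel)"
    by (rule nn_integral_cmult) (unfold F_def indicator_cell[OF h], measurable)
  also have "(\<integral>\<^sup>+ x. \<integral>\<^sup>+ y. \<integral>\<^sup>+ s. F x y s \<partial>lborel \<partial>lborel \<partial>lborel)
      = (\<integral>\<^sup>+ s. \<integral>\<^sup>+ x. \<integral>\<^sup>+ y. F x y s \<partial>lborel \<partial>lborel \<partial>lborel)"
  proof -
    have "(\<integral>\<^sup>+ x. \<integral>\<^sup>+ y. \<integral>\<^sup>+ s. F x y s \<partial>lborel \<partial>lborel \<partial>lborel)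
        = (\<integral>\<^sup>+ x. \<integral>\<^sup>+ s. \<integral>\<^sup>+ y. F x y s \<partial>lborel \<partial>lborel \<partial>lborel)"
      by (intro nn_integral_cong lborel_pair.Fubini'[symmetric])
         (unfold_locales, unfold F_def indicator_cell[OF h], measurable)
    also have "\<dots> = (\<integral>\<^sup>+ s. \<integral>\<^sup>+ x. \<integral>\<^sup>+ y. F x y s \<partial>lborel \<partial>lborel \<partial>lborel)"
      by (rule pair_sigma_finite.Fubini'[symmetric]) (unfold_locales, unfold F_def indicator_cell[OF h], measurable)
    finally show ?thesis .
  qed
  also have "\<dots> \<le> (\<integral>\<^sup>+ s. (ennreal (2 ^ CARD('d)) * (ennreal (h ^ CARD('d)) * (\<integral>\<^sup>+ z. Gr z \<partial>lborel)))
                       * indicator {0..1::real} s \<partial>lborel)"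
  proof (intro nn_integral_mono)
    fix s :: real
    have "(\<integral>\<^sup>+ x. \<integral>\<^sup>+ y. F x y s \<partial>lborel \<partial>lborel)
        = (\<integral>\<^sup>+ x. \<integral>\<^sup>+ y. indicator (hcube h (cell_index h x)) y * Gr (x + s *\<^sub>R (y - x)) \<partial>lborel \<partial>lborel)
            * indicator {0..1} s"
      by (cases "s \<in> {0..1}") (simp_all add: F_def)
    also have "\<dots> \<le> (ennreal (2 ^ CARD('d)) * (ennreal (h ^ CARD('d)) * (\<integral>\<^sup>+ z. Gr z \<partial>lborel)))
                     * indicator {0..1::real} s"
      by (cases "s \<in> {0..1}") (auto intro!: cell_segment_integral_uniform h)
    finally show "(\<integral>\<^sup>+ x. \<integral>\<^sup>+ y. F x y s \<partial>lborel \<partial>lborel) \<le> \<dots>" .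
  qed
  also have "\<dots> = ennreal (2 ^ CARD('d)) * (ennreal (h ^ CARD('d)) * (\<integral>\<^sup>+ z. Gr z \<partial>lborel))"
    by (simp add: nn_integral_cmult_indicator)
  finally have "(\<integral>\<^sup>+ x. ennreal (((\<integral> y. f y * indicator (hcube h (cell_index h x)) y \<partial>lborel) / h ^ CARD('d)
                            - f x)\<^sup>2) \<partial>lborel)
     \<le> c * (ennreal (2 ^ CARD('d)) * (ennreal (h ^ CARD('d)) * (\<integral>\<^sup>+ z. Gr z \<partial>lborel)))"
    by (simp add: mult_left_mono)
  also have "\<dots> = (ennreal (1 / h ^ CARD('d)) * ennreal (h ^ CARD('d))) * ennreal (real CARD('d) * h\<^sup>2)
                     * ennreal (2 ^ CARD('d)) * (\<integral>\<^sup>+ z. Gr z \<partial>lborel)"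
    by (simp add: c_def mult_ac)
  also have "ennreal (1 / h ^ CARD('d)) * ennreal (h ^ CARD('d)) = 1"
    using h by (simp add: ennreal_mult'[symmetric])
  finally show ?thesis by (simp add: Gr_def cell_mass_def)
qed

section \<open>The sampled process and the variance of the histogram\<close>

text \<open>A process with marginal density \<open>f\<close> and pairwise joint densities \<open>f\<^sub>u\<close> depending only on the
  lag \<open>u\<close>, subject to the dependence conditions A1'(i) (joint densities blow up at most like
  \<open>u\<^sup>-\<^sup>\<gamma>\<^sup>0\<close> at short lags) and A1'(ii) (dependence decays like \<open>\<pi>(u)\<close> at long lags).\<close>
locale sampled_process =
  fixes M :: "'a measure"
    and X :: "real \<Rightarrow> 'a \<Rightarrow> real ^ 'd::finite"
    and f :: "real ^ 'd \<Rightarrow> real"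
    and fu :: "real \<Rightarrow> real ^ 'd \<Rightarrow> real ^ 'd \<Rightarrow> real"
    and \<gamma>0 u0 :: real
    and \<phi> \<kappa> :: "real ^ 'd \<Rightarrow> real"
    and \<pi> :: "real \<Rightarrow> real"
  assumes prob: "prob_space M"
    and f_nonneg: "\<And>x. 0 \<le> f x"
    and dens: "\<And>t. distributed M lborel (X t) (\<lambda>x. ennreal (f x))"
    and joint: "\<And>s t. s \<noteq> t \<Longrightarrow>
        distributed M (lborel \<Otimes>\<^sub>M lborel) (\<lambda>\<omega>. (X s \<omega>, X t \<omega>))
          (\<lambda>p. ennreal (fu \<bar>t - s\<bar> (fst p) (snd p)))"
    and f_cont: "continuous_on UNIV f"
    and u0_pos: "0 < u0"
    and \<phi>_pos: "\<And>y. 0 < \<phi> y" and \<phi>_cont: "continuous_on UNIV \<phi>" and \<phi>_int: "integrable lborel \<phi>"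
    and short_lags: "\<And>y u z. 0 < u \<Longrightarrow> u \<le> u0 \<Longrightarrow> fu u y z \<le> \<phi> y * u powr (- \<gamma>0)"
    and \<kappa>_pos: "\<And>y. 0 < \<kappa> y" and \<kappa>_cont: "continuous_on UNIV \<kappa>" and \<kappa>_int: "integrable lborel \<kappa>"
    and long_lags: "\<And>y u z. u0 \<le> u \<Longrightarrow> \<bar>fu u y z - f y * f z\<bar> \<le> \<kappa> y * \<pi> u"
begin

lemma X_measurable[measurable]: "X t \<in> borel_measurable M"
  using distributed_measurable[OF dens] by (simp add: measurable_lborel2)

lemma f_measurable[measurable]: "f \<in> borel_measurable borel"
  by (rule borel_measurable_continuous_onI[OF f_cont])

lemma \<phi>_measurable[measurable]: "\<phi> \<in> borel_measurable borel"
  by (rule borel_measurable_continuous_onI[OF \<phi>_cont])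

lemma \<kappa>_measurable[measurable]: "\<kappa> \<in> borel_measurable borel"
  by (rule borel_measurable_continuous_onI[OF \<kappa>_cont])

lemma \<pi>_nonneg: "u0 \<le> u \<Longrightarrow> 0 \<le> \<pi> u"
proof -
  assume "u0 \<le> u"
  then have "0 \<le> \<kappa> 0 * \<pi> u" using long_lags[of u 0 0] by linarith
  then show ?thesis using \<kappa>_pos[of 0] by (simp add: zero_le_mult_iff)
qed

lemma prob_in_set:
  assumes [measurable]: "A \<in> sets borel"
  shows "emeasure M {\<omega>\<in>space M. X t \<omega> \<in> A} = (\<integral>\<^sup>+ y. ennreal (f y) * indicator A y \<partial>lborel)"
proof -
  have "{\<omega>\<in>space M. X t \<omega> \<in> A} = X t -` A \<inter> space M" by auto
  then show ?thesis using distributed_emeasure[OF dens, of A] by simp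
qed

lemma prob_both_in_set:
  assumes [measurable]: "A \<in> sets borel" and st: "s \<noteq> t"
  shows "emeasure M {\<omega>\<in>space M. X s \<omega> \<in> A \<and> X t \<omega> \<in> A}
     = (\<integral>\<^sup>+ y. \<integral>\<^sup>+ z. ennreal (fu \<bar>t - s\<bar> y z) * indicator A y * indicator A z \<partial>lborel \<partial>lborel)"
proof -
  note D = joint[OF st]
  have [measurable]: "(\<lambda>p. ennreal (fu \<bar>t - s\<bar> (fst p) (snd p))) \<in> borel_measurable (lborel \<Otimes>\<^sub>M lborel)"
    using distributed_borel_measurable[OF D] .
  have "{\<omega>\<in>space M. X s \<omega> \<in> A \<and> X t \<omega> \<in> A} = (\<lambda>\<omega>. (X s \<omega>, X t \<omega>)) -` (A \<times> A) \<inter> space M" by auto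
  then have "emeasure M {\<omega>\<in>space M. X s \<omega> \<in> A \<and> X t \<omega> \<in> A}
     = (\<integral>\<^sup>+ p. ennreal (fu \<bar>t - s\<bar> (fst p) (snd p)) * indicator (A \<times> A) p \<partial>(lborel \<Otimes>\<^sub>M lborel))"
    using distributed_emeasure[OF D, of "A \<times> A"] by simp
  also have "\<dots> = (\<integral>\<^sup>+ y. \<integral>\<^sup>+ z. ennreal (fu \<bar>t - s\<bar> (fst (y, z)) (snd (y, z))) * indicator (A \<times> A) (y, z)
                      \<partial>lborel \<partial>lborel)"
    by (rule lborel.nn_integral_fst[symmetric]) measurable
  finally show ?thesis by (simp add: indicator_times mult.assoc)
qed

lemma f_integrable: "integrable lborel f" and f_integral: "(\<integral> y. f y \<partial>lborel) = 1"
proof -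
  interpret prob_space M by (rule prob)
  have mass: "(\<integral>\<^sup>+ y. ennreal (f y) \<partial>lborel) = 1"
    using prob_in_set[of UNIV 0] by (simp add: emeasure_space_1)
  then show int: "integrable lborel f" by (intro integrableI_nonneg) (auto simp: f_nonneg)
  show "(\<integral> y. f y \<partial>lborel) = 1"
    using nn_integral_eq_integral[OF int] mass f_nonneg integral_nonneg_AE[of f lborel] by simp
qed

lemma prob_cell:
  assumes h: "0 < h"
  shows "measure M {\<omega>\<in>space M. X t \<omega> \<in> hcube h (cell_index h x)} = cell_mass f h x"
proof -
  interpret prob_space M by (rule prob)
  have "ennreal (measure M {\<omega>\<in>space M. X t \<omega> \<in> hcube h (cell_index h x)}) = ennreal (cell_mass f h x)"
    using prob_in_set[of "hcube h (cell_index h x)" t]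
    by (simp add: emeasure_eq_measure cell_mass_def nn_integral_indicator_real f_integrable f_nonneg)
  then show ?thesis by (simp add: cell_mass_nonneg f_nonneg)
qed

text \<open>Bound on the excess probability that two samples at lag \<open>u\<close> both fall into the cell of \<open>x\<close>.\<close>
definition cell_lag_bound :: "real \<Rightarrow> real ^ 'd \<Rightarrow> real \<Rightarrow> real" where
  "cell_lag_bound h x u =
     (if u \<le> u0 then u powr (- \<gamma>0) * cell_mass \<phi> h x else \<pi> u * cell_mass \<kappa> h x)"

lemma cell_lag_bound_nonneg: "0 < u \<Longrightarrow> 0 \<le> cell_lag_bound h x u"
  using \<phi>_pos \<kappa>_pos \<pi>_nonneg[of u]
  by (auto simp: cell_lag_bound_def less_imp_le intro!: mult_nonneg_nonneg cell_mass_nonneg)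

lemma nn_integral_product_indicator:
  fixes g :: "real ^ 'd \<Rightarrow> ennreal"
  assumes [measurable]: "g \<in> borel_measurable borel" "A \<in> sets borel"
  shows "(\<integral>\<^sup>+ y. \<integral>\<^sup>+ z. g y * indicator A y * indicator A z \<partial>lborel \<partial>lborel)
       = (\<integral>\<^sup>+ y. g y * indicator A y \<partial>lborel) * emeasure lborel A"
  by (simp add: nn_integral_cmult_indicator nn_integral_multc)

lemma prob_both_in_cell_short_lag:
  fixes x :: "real ^ 'd"
  assumes h: "0 < h" and st: "s \<noteq> t" and u: "\<bar>t - s\<bar> \<le> u0"
  defines "A \<equiv> hcube h (cell_index h x)"
  shows "emeasure M {\<omega>\<in>space M. X s \<omega> \<in> A \<and> X t \<omega> \<in> A}
           \<le> ennreal (h ^ CARD('d) * cell_lag_bound h x \<bar>t - s\<bar>)"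
proof -
  have A[measurable]: "A \<in> sets borel" by (simp add: A_def)
  have u0: "0 < \<bar>t - s\<bar>" using st by simp
  have "emeasure M {\<omega>\<in>space M. X s \<omega> \<in> A \<and> X t \<omega> \<in> A}
     \<le> (\<integral>\<^sup>+ y. \<integral>\<^sup>+ z. ennreal (\<bar>t - s\<bar> powr (- \<gamma>0) * \<phi> y) * indicator A y * indicator A z \<partial>lborel \<partial>lborel)"
    unfolding prob_both_in_set[OF A st]
    by (intro nn_integral_mono mult_right_mono ennreal_leI)
       (use short_lags[OF u0 u] in \<open>auto simp: mult.commute\<close>)
  also have "\<dots> = (\<integral>\<^sup>+ y. ennreal (\<bar>t - s\<bar> powr (- \<gamma>0) * \<phi> y) * indicator A y \<partial>lborel) * ennreal (h ^ CARD('d))"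
    using h by (simp add: nn_integral_product_indicator emeasure_hcube A_def)
  also have "(\<integral>\<^sup>+ y. ennreal (\<bar>t - s\<bar> powr (- \<gamma>0) * \<phi> y) * indicator A y \<partial>lborel)
      = ennreal (\<integral> y. \<bar>t - s\<bar> powr (- \<gamma>0) * \<phi> y * indicator A y \<partial>lborel)"
    using \<phi>_pos by (intro nn_integral_indicator_real) (auto intro!: \<phi>_int less_imp_le[OF \<phi>_pos] mult_nonneg_nonneg)
  also have "(\<integral> y. \<bar>t - s\<bar> powr (- \<gamma>0) * \<phi> y * indicator A y \<partial>lborel) = \<bar>t - s\<bar> powr (- \<gamma>0) * cell_mass \<phi> h x"
    by (simp add: cell_mass_def A_def mult.assoc)
  finally show ?thesis
    using u h by (simp add: cell_lag_bound_def ennreal_mult'[symmetric] mult.commute)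
qed

lemma prob_both_in_cell_long_lag:
  fixes x :: "real ^ 'd"
  assumes h: "0 < h" and u: "u0 < \<bar>t - s\<bar>"
  defines "A \<equiv> hcube h (cell_index h x)"
  shows "emeasure M {\<omega>\<in>space M. X s \<omega> \<in> A \<and> X t \<omega> \<in> A}
           \<le> ennreal ((cell_mass f h x)\<^sup>2 + h ^ CARD('d) * cell_lag_bound h x \<bar>t - s\<bar>)"
proof -
  have A[measurable]: "A \<in> sets borel" by (simp add: A_def)
  define v where "v = \<bar>t - s\<bar>"
  have st: "s \<noteq> t" and \<pi>0: "0 \<le> \<pi> v" using u u0_pos \<pi>_nonneg[of v] by (auto simp: v_def)
  have p: "(\<integral>\<^sup>+ y. ennreal (f y) * indicator A y \<partial>lborel) = ennreal (cell_mass f h x)"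
    by (simp add: A_def cell_mass_def nn_integral_indicator_real f_integrable f_nonneg)
  have "emeasure M {\<omega>\<in>space M. X s \<omega> \<in> A \<and> X t \<omega> \<in> A}
     \<le> (\<integral>\<^sup>+ y. \<integral>\<^sup>+ z. (ennreal (f y) * indicator A y) * (ennreal (f z) * indicator A z)
             + ennreal (\<pi> v * \<kappa> y) * indicator A y * indicator A z \<partial>lborel \<partial>lborel)"
    unfolding prob_both_in_set[OF A st] v_def[symmetric]
  proof (intro nn_integral_mono)
    fix y z
    have "fu v y z \<le> f y * f z + \<pi> v * \<kappa> y" using long_lags[of v y z] u by (auto simp: v_def mult.commute)
    then have "ennreal (fu v y z) \<le> ennreal (f y) * ennreal (f z) + ennreal (\<pi> v * \<kappa> y)"
      using f_nonneg \<pi>0 \<kappa>_pos[of y]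
      by (simp add: ennreal_mult'[symmetric] ennreal_plus[symmetric] del: ennreal_plus)
    then show "ennreal (fu v y z) * indicator A y * indicator A z
        \<le> (ennreal (f y) * indicator A y) * (ennreal (f z) * indicator A z)
          + ennreal (\<pi> v * \<kappa> y) * indicator A y * indicator A z"
      by (auto simp: indicator_def)
  qed
  also have "\<dots> = (\<integral>\<^sup>+ y. \<integral>\<^sup>+ z. (ennreal (f y) * indicator A y) * (ennreal (f z) * indicator A z) \<partial>lborel \<partial>lborel)
             + (\<integral>\<^sup>+ y. \<integral>\<^sup>+ z. ennreal (\<pi> v * \<kappa> y) * indicator A y * indicator A z \<partial>lborel \<partial>lborel)"
    by (subst nn_integral_add[symmetric]) (measurable, rule nn_integral_cong, rule nn_integral_add, measurable)
  also have "(\<integral>\<^sup>+ y. \<integral>\<^sup>+ z. (ennreal (f y) * indicator A y) * (ennreal (f z) * indicator A z) \<partial>lborel \<partial>lborel)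
      = ennreal (cell_mass f h x) * ennreal (cell_mass f h x)"
    by (simp add: nn_integral_cmult nn_integral_multc p)
  also have "(\<integral>\<^sup>+ y. \<integral>\<^sup>+ z. ennreal (\<pi> v * \<kappa> y) * indicator A y * indicator A z \<partial>lborel \<partial>lborel)
      = (\<integral>\<^sup>+ y. ennreal (\<pi> v * \<kappa> y) * indicator A y \<partial>lborel) * ennreal (h ^ CARD('d))"
    using h by (simp add: nn_integral_product_indicator emeasure_hcube A_def)
  also have "(\<integral>\<^sup>+ y. ennreal (\<pi> v * \<kappa> y) * indicator A y \<partial>lborel) = ennreal (\<integral> y. \<pi> v * \<kappa> y * indicator A y \<partial>lborel)"
    using \<pi>0 \<kappa>_pos by (intro nn_integral_indicator_real) (auto intro!: \<kappa>_int less_imp_le[OF \<kappa>_pos] mult_nonneg_nonneg)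
  also have "(\<integral> y. \<pi> v * \<kappa> y * indicator A y \<partial>lborel) = \<pi> v * cell_mass \<kappa> h x"
    by (simp add: cell_mass_def A_def mult.assoc)
  also have "ennreal (cell_mass f h x) * ennreal (cell_mass f h x) + ennreal (\<pi> v * cell_mass \<kappa> h x) * ennreal (h ^ CARD('d))
      = ennreal ((cell_mass f h x)\<^sup>2 + h ^ CARD('d) * cell_lag_bound h x v)"
    using u h \<pi>0 \<kappa>_pos f_nonneg cell_mass_nonneg[of f h x] cell_mass_nonneg[of \<kappa> h x]
    by (simp add: cell_lag_bound_def v_def ennreal_mult'[symmetric] power2_eq_square less_imp_le
        ennreal_plus[symmetric] mult.commute del: ennreal_plus)
  finally show ?thesis by (simp add: v_def)
qed

lemma prob_both_in_cell:
  assumes h: "0 < h" and st: "s \<noteq> t"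
  shows "measure M {\<omega>\<in>space M. X s \<omega> \<in> hcube h (cell_index h x) \<and> X t \<omega> \<in> hcube h (cell_index h x)}
     \<le> (cell_mass f h x)\<^sup>2 + h ^ CARD('d) * cell_lag_bound h x \<bar>t - s\<bar>"
proof -
  interpret prob_space M by (rule prob)
  have "ennreal (measure M {\<omega>\<in>space M. X s \<omega> \<in> hcube h (cell_index h x) \<and> X t \<omega> \<in> hcube h (cell_index h x)})
     \<le> ennreal ((cell_mass f h x)\<^sup>2 + h ^ CARD('d) * cell_lag_bound h x \<bar>t - s\<bar>)"
  proof (cases "\<bar>t - s\<bar> \<le> u0")
    case True
    then show ?thesis
      using prob_both_in_cell_short_lag[OF h st True, of x]
      by (simp add: emeasure_eq_measure order_trans[OF _ ennreal_leI])
  next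
    case False
    then show ?thesis
      using prob_both_in_cell_long_lag[OF h, where s=s and t=t and x=x] by (simp add: emeasure_eq_measure)
  qed
  moreover have "0 \<le> h ^ CARD('d) * cell_lag_bound h x \<bar>t - s\<bar>"
    using h st by (simp add: cell_lag_bound_nonneg)
  ultimately show ?thesis by (subst (asm) ennreal_le_iff) (auto simp del: ennreal_plus)
qed

text \<open>Mean squared error of the histogram at a fixed point \<open>x\<close>: squared bias, plus the variance
  of independent-looking samples, plus the covariances, which are controlled lag by lag.\<close>
lemma pointwise_mse_le:
  assumes h: "0 < h" and d: "0 < \<delta>" and n: "0 < n"
  shows "(\<integral>\<^sup>+ \<omega>. ennreal ((hist_est X \<delta> h n \<omega> x - f x)\<^sup>2) \<partial>M)
     \<le> ennreal ((cell_mass f h x / h ^ CARD('d) - f x)\<^sup>2)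
        + ennreal (cell_mass f h x / (real n * h ^ CARD('d) * h ^ CARD('d)))
        + ennreal (2 / (real n * h ^ CARD('d))) * (\<Sum>m=1..n. ennreal (cell_lag_bound h x (real m * \<delta>)))"
proof -
  interpret prob_space M by (rule prob)
  define A where "A = hcube h (cell_index h x)"
  define c where "c = 1 / (real n * h ^ CARD('d))"
  define p where "p = cell_mass f h x"
  define B where "B u = h ^ CARD('d) * cell_lag_bound h x u" for u
  have B0: "0 \<le> B (real m * \<delta>)" if "1 \<le> m" for m :: nat
    using h d that by (simp add: B_def cell_lag_bound_nonneg)
  have "(\<integral>\<^sup>+ \<omega>. ennreal ((hist_est X \<delta> h n \<omega> x - f x)\<^sup>2) \<partial>M)
      = (\<integral>\<^sup>+ \<omega>. ennreal ((c * (\<Sum>k=1..n. indicator A (X (real k * \<delta>) \<omega>)) - f x)\<^sup>2) \<partial>M)"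
    by (simp add: hist_est_def c_def A_def)
  also have "\<dots> \<le> ennreal ((c * real n * p - f x)\<^sup>2 + c\<^sup>2 * real n * p
          + c\<^sup>2 * (\<Sum>k\<in>{1..n}. \<Sum>l\<in>{1..n}-{k}. B \<bar>real l * \<delta> - real k * \<delta>\<bar>))"
  proof (rule scaled_count_mse[where N=lborel])
    show "A \<in> sets lborel" by (simp add: A_def)
    show "measure M {\<omega> \<in> space M. X (real k * \<delta>) \<omega> \<in> A} = p" for k
      by (simp add: A_def p_def prob_cell[OF h])
    fix k l assume "k \<in> {1..n}" "l \<in> {1..n}" "k \<noteq> l"
    then have "real k * \<delta> \<noteq> real l * \<delta>" using d by simp
    then show "measure M {\<omega> \<in> space M. X (real k * \<delta>) \<omega> \<in> A \<and> X (real l * \<delta>) \<omega> \<in> A}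
        \<le> p\<^sup>2 + B \<bar>real l * \<delta> - real k * \<delta>\<bar>"
      using prob_both_in_cell[OF h] by (simp add: A_def p_def B_def)
  qed (use h in \<open>auto simp: c_def\<close>)
  also have "\<dots> \<le> ennreal ((c * real n * p - f x)\<^sup>2 + c\<^sup>2 * real n * p + c\<^sup>2 * (2 * real n * (\<Sum>m=1..n. B (real m * \<delta>))))"
    by (intro ennreal_leI add_left_mono mult_left_mono sum_over_lag_pairs[where B=B, OF d B0]) auto
  also have "\<dots> = ennreal ((p / h ^ CARD('d) - f x)\<^sup>2) + ennreal (p / (real n * h ^ CARD('d) * h ^ CARD('d)))
        + ennreal (2 / (real n * h ^ CARD('d))) * ennreal (\<Sum>m=1..n. cell_lag_bound h x (real m * \<delta>))"
  proof -
    define S where "S = (\<Sum>m=1..n. cell_lag_bound h x (real m * \<delta>))"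
    have "(\<Sum>m=1..n. B (real m * \<delta>)) = h ^ CARD('d) * S"
      by (simp add: B_def S_def sum_distrib_left)
    then have "(c * real n * p - f x)\<^sup>2 + c\<^sup>2 * real n * p + c\<^sup>2 * (2 * real n * (\<Sum>m=1..n. B (real m * \<delta>)))
        = (p / h ^ CARD('d) - f x)\<^sup>2 + p / (real n * h ^ CARD('d) * h ^ CARD('d))
          + 2 / (real n * h ^ CARD('d)) * S"
      using h n by (simp add: c_def power2_eq_square field_simps)
    moreover have "0 \<le> p / (real n * h ^ CARD('d) * h ^ CARD('d))"
      using h by (simp add: p_def cell_mass_nonneg f_nonneg)
    moreover have "0 \<le> 2 / (real n * h ^ CARD('d)) * S"
      unfolding S_def using d h by (intro mult_nonneg_nonneg sum_nonneg cell_lag_bound_nonneg) auto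
    moreover have "ennreal (2 / (real n * h ^ CARD('d)) * S) = ennreal (2 / (real n * h ^ CARD('d))) * ennreal S"
      using h by (intro ennreal_mult') simp
    ultimately show ?thesis
      by (simp only: S_def ennreal_plus add_nonneg_nonneg zero_le_power2)
  qed
  also have "ennreal (\<Sum>m=1..n. cell_lag_bound h x (real m * \<delta>)) = (\<Sum>m=1..n. ennreal (cell_lag_bound h x (real m * \<delta>)))"
    using d by (intro sum_ennreal[symmetric] cell_lag_bound_nonneg) auto
  finally show ?thesis by (simp add: p_def)
qed

text \<open>The lag bound integrated over all cells.\<close>
definition lag_weight :: "real \<Rightarrow> real" where
  "lag_weight u = (if u \<le> u0 then u powr (- \<gamma>0) * (\<integral> y. \<phi> y \<partial>lborel) else \<pi> u * (\<integral> y. \<kappa> y \<partial>lborel))"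

lemma lag_weight_nonneg: "0 < u \<Longrightarrow> 0 \<le> lag_weight u"
  using \<pi>_nonneg[of u] \<phi>_pos \<kappa>_pos
  by (auto simp: lag_weight_def less_imp_le intro!: mult_nonneg_nonneg integral_nonneg_AE)

lemma nn_integral_cell_lag_bound:
  assumes h: "0 < h" and u: "0 < u"
  shows "(\<integral>\<^sup>+ x. ennreal (cell_lag_bound h x u) \<partial>lborel) = ennreal (h ^ CARD('d) * lag_weight u)"
proof -
  have int: "(\<integral>\<^sup>+ x. ennreal (c * cell_mass g h x) \<partial>lborel) = ennreal (c * (h ^ CARD('d) * (\<integral> y. g y \<partial>lborel)))"
    if c: "0 \<le> c" and g: "integrable lborel g" "\<And>y. 0 < g y" for c and g :: "real ^ 'd \<Rightarrow> real"
  proof -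
    have [measurable]: "g \<in> borel_measurable borel" using g by (simp add: borel_measurable_integrable)
    then have [measurable]: "cell_mass g h \<in> borel_measurable borel" using h by simp
    have "(\<integral>\<^sup>+ x. ennreal (c * cell_mass g h x) \<partial>lborel) = (\<integral>\<^sup>+ x. ennreal c * ennreal (cell_mass g h x) \<partial>lborel)"
      by (simp add: ennreal_mult'[OF c])
    also have "\<dots> = ennreal c * (\<integral>\<^sup>+ x. ennreal (cell_mass g h x) \<partial>lborel)"
      by (rule nn_integral_cmult) measurable
    also have "\<dots> = ennreal (c * (h ^ CARD('d) * (\<integral> y. g y \<partial>lborel)))"
    proof -
      have "0 \<le> (\<integral> y. g y \<partial>lborel)" using g by (intro integral_nonneg_AE) (auto simp: less_imp_le)
      then show ?thesis
        using g c h by (simp add: nn_integral_cell_mass[OF h] less_imp_le ennreal_mult'[symmetric])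
    qed
    finally show ?thesis .
  qed
  show ?thesis
    using int[of "u powr (- \<gamma>0)" \<phi>] int[of "\<pi> u" \<kappa>] \<phi>_int \<phi>_pos \<kappa>_int \<kappa>_pos \<pi>_nonneg[of u]
    by (auto simp: cell_lag_bound_def lag_weight_def mult_ac)
qed

lemma hist_est_measurable:
  assumes h: "0 < h"
  shows "(\<lambda>p. ennreal ((hist_est X \<delta> h n (fst p) (snd p) - f (snd p))\<^sup>2)) \<in> borel_measurable (M \<Otimes>\<^sub>M lborel)"
proof -
  have "(\<lambda>p. hist_est X \<delta> h n (fst p) (snd p)) = (\<lambda>p. (1 / (real n * h ^ CARD('d))) *
     (\<Sum>k=1..n. (if cell_index h (X (real k * \<delta>) (fst p)) = cell_index h (snd p) then 1 else 0)))"
    by (simp add: hist_est_def indicator_cell[OF h])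
  also have "\<dots> \<in> borel_measurable (M \<Otimes>\<^sub>M lborel)" by measurable
  finally have [measurable]: "(\<lambda>p. hist_est X \<delta> h n (fst p) (snd p)) \<in> borel_measurable (M \<Otimes>\<^sub>M lborel)" .
  show ?thesis by measurable
qed

lemma MISE_le:
  assumes h: "0 < h" and d: "0 < \<delta>" and n: "0 < n"
  shows "MISE M X f \<delta> h n \<le> (\<integral>\<^sup>+ x. ennreal ((cell_mass f h x / h ^ CARD('d) - f x)\<^sup>2) \<partial>lborel)
      + ennreal (1 / (real n * h ^ CARD('d))) + ennreal (2 / real n * (\<Sum>m=1..n. lag_weight (real m * \<delta>)))"
proof -
  interpret prob_space M by (rule prob)
  interpret P: pair_sigma_finite M lborel ..
  have [measurable]: "(\<lambda>x. cell_lag_bound h x u) \<in> borel_measurable borel" for u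
    using h unfolding cell_lag_bound_def by measurable
  define e where "e = ennreal (2 / (real n * h ^ CARD('d)))"
  have "MISE M X f \<delta> h n = (\<integral>\<^sup>+ x. \<integral>\<^sup>+ \<omega>. ennreal ((hist_est X \<delta> h n \<omega> x - f x)\<^sup>2) \<partial>M \<partial>lborel)"
    using P.Fubini'[of "\<lambda>\<omega> x. ennreal ((hist_est X \<delta> h n \<omega> x - f x)\<^sup>2)"] hist_est_measurable[OF h]
    by (simp add: MISE_def case_prod_beta')
  also have "\<dots> \<le> (\<integral>\<^sup>+ x. ennreal ((cell_mass f h x / h ^ CARD('d) - f x)\<^sup>2)
        + ennreal (cell_mass f h x / (real n * h ^ CARD('d) * h ^ CARD('d)))
        + e * (\<Sum>m=1..n. ennreal (cell_lag_bound h x (real m * \<delta>))) \<partial>lborel)"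
    unfolding e_def by (intro nn_integral_mono pointwise_mse_le h d n)
  also have "\<dots> = (\<integral>\<^sup>+ x. ennreal ((cell_mass f h x / h ^ CARD('d) - f x)\<^sup>2) \<partial>lborel)
        + (\<integral>\<^sup>+ x. ennreal (cell_mass f h x / (real n * h ^ CARD('d) * h ^ CARD('d))) \<partial>lborel)
        + e * (\<Sum>m=1..n. \<integral>\<^sup>+ x. ennreal (cell_lag_bound h x (real m * \<delta>)) \<partial>lborel)"
    using h by (simp add: nn_integral_add nn_integral_cmult nn_integral_sum)
  also have "(\<integral>\<^sup>+ x. ennreal (cell_mass f h x / (real n * h ^ CARD('d) * h ^ CARD('d))) \<partial>lborel)
      = ennreal (1 / (real n * h ^ CARD('d)))"
  proof -
    have "(\<integral>\<^sup>+ x. ennreal (cell_mass f h x / (real n * h ^ CARD('d) * h ^ CARD('d))) \<partial>lborel)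
        = ennreal (1 / (real n * h ^ CARD('d) * h ^ CARD('d))) * (\<integral>\<^sup>+ x. ennreal (cell_mass f h x) \<partial>lborel)"
      using h by (subst nn_integral_cmult[symmetric]) (auto simp: ennreal_mult'[symmetric] cell_mass_nonneg f_nonneg)
    also have "\<dots> = ennreal (1 / (real n * h ^ CARD('d)))"
      using h n
      by (simp add: nn_integral_cell_mass f_integrable f_nonneg f_integral ennreal_mult'[symmetric] field_simps)
    finally show ?thesis .
  qed
  also have "e * (\<Sum>m=1..n. \<integral>\<^sup>+ x. ennreal (cell_lag_bound h x (real m * \<delta>)) \<partial>lborel)
      = ennreal (2 / real n * (\<Sum>m=1..n. lag_weight (real m * \<delta>)))"
  proof -
    have w0: "0 \<le> (\<Sum>m=1..n. lag_weight (real m * \<delta>))" using d by (intro sum_nonneg lag_weight_nonneg) auto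
    have "(\<Sum>m=1..n. \<integral>\<^sup>+ x. ennreal (cell_lag_bound h x (real m * \<delta>)) \<partial>lborel)
        = (\<Sum>m=1..n. ennreal (h ^ CARD('d) * lag_weight (real m * \<delta>)))"
      using h d by (intro sum.cong) (simp_all add: nn_integral_cell_lag_bound)
    also have "\<dots> = ennreal (\<Sum>m=1..n. h ^ CARD('d) * lag_weight (real m * \<delta>))"
      using h d by (intro sum_ennreal mult_nonneg_nonneg lag_weight_nonneg) auto
    finally have "(\<Sum>m=1..n. \<integral>\<^sup>+ x. ennreal (cell_lag_bound h x (real m * \<delta>)) \<partial>lborel)
        = ennreal (h ^ CARD('d) * (\<Sum>m=1..n. lag_weight (real m * \<delta>)))"
      by (simp add: sum_distrib_left)
    then show ?thesis
      using h n w0 by (simp add: e_def ennreal_mult'[symmetric] field_simps)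
  qed
  finally show ?thesis .
qed

end

section \<open>The general MISE bound\<close>

text \<open>Adds the smoothness A0(i) of \<open>f\<close> (only the first derivatives are needed) and the shape of the
  long-lag dependence rate \<open>\<pi>\<close> from A1'(ii): bounded, eventually nonincreasing and integrable.\<close>
locale regular_sampled_process = sampled_process M X f fu \<gamma>0 u0 \<phi> \<kappa> \<pi>
  for M :: "'a measure" and X :: "real \<Rightarrow> 'a \<Rightarrow> real ^ 'd::finite" and f fu \<gamma>0 u0 \<phi> \<kappa> \<pi> +
  fixes Df :: "'d \<Rightarrow> real ^ 'd \<Rightarrow> real" and U u1 B\<pi> :: real
  assumes deriv: "\<And>x. (f has_derivative (\<lambda>v. \<Sum>i\<in>UNIV. Df i x * v $ i)) (at x)"
    and Df_cont: "\<And>i. continuous_on UNIV (Df i)"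
    and Df_sq_int: "\<And>i. integrable lborel (\<lambda>x. (Df i x)\<^sup>2)"
    and \<pi>_bounded: "\<And>u. \<bar>\<pi> u\<bar> \<le> B\<pi>"
    and \<pi>_mono: "\<And>a b. U \<le> a \<Longrightarrow> a \<le> b \<Longrightarrow> \<pi> b \<le> \<pi> a"
    and u0_u1: "u0 < u1"
    and \<pi>_int: "integrable lborel (\<lambda>s. indicator {u1..} s * \<pi> s)"
begin

definition bias_const :: real where
  "bias_const = real CARD('d) * 2 ^ CARD('d) * (\<integral> z. (\<Sum>i\<in>UNIV. (Df i z)\<^sup>2) \<partial>lborel)"

definition phi_total :: real where
  "phi_total = (\<integral> y. \<phi> y \<partial>lborel)"

text \<open>Beyond \<open>tail_start\<close> the rate \<open>\<pi>\<close> is nonincreasing and integrable.\<close>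
definition tail_start :: real where
  "tail_start = max U u1"

definition long_lag_const :: real where
  "long_lag_const = (\<integral> y. \<kappa> y \<partial>lborel) *
     (B\<pi> * (tail_start + 1) + (\<integral> s. indicator {tail_start..} s * \<pi> s \<partial>lborel))"

lemma bias_const_nonneg: "0 \<le> bias_const"
  unfolding bias_const_def by (intro mult_nonneg_nonneg integral_nonneg_AE) (auto intro!: AE_I2 sum_nonneg)

lemma phi_total_nonneg: "0 \<le> phi_total"
  unfolding phi_total_def using \<phi>_pos by (intro integral_nonneg_AE) (auto simp: less_imp_le)

lemma long_lag_const_nonneg: "0 \<le> long_lag_const"
proof -
  have "0 \<le> (\<integral> s. indicator {tail_start..} s * \<pi> s \<partial>lborel)"
    using \<pi>_nonneg u0_u1 by (intro integral_nonneg_AE) (auto intro!: AE_I2 simp: indicator_def tail_start_def)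
  moreover have "0 \<le> B\<pi>" using \<pi>_bounded[of 0] by simp
  moreover have "0 \<le> tail_start" using u0_u1 u0_pos by (simp add: tail_start_def)
  moreover have "0 \<le> (\<integral> y. \<kappa> y \<partial>lborel)" using \<kappa>_pos by (intro integral_nonneg_AE) (auto simp: less_imp_le)
  ultimately show ?thesis unfolding long_lag_const_def by (intro mult_nonneg_nonneg add_nonneg_nonneg) auto
qed

lemma integrated_sq_bias_le:
  assumes h: "0 < h"
  shows "(\<integral>\<^sup>+ x. ennreal ((cell_mass f h x / h ^ CARD('d) - f x)\<^sup>2) \<partial>lborel) \<le> ennreal (bias_const * h\<^sup>2)"
proof -
  have int: "integrable lborel (\<lambda>z. \<Sum>i\<in>UNIV. (Df i z)\<^sup>2)" using Df_sq_int by auto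
  have "0 \<le> (\<integral> z. (\<Sum>i\<in>UNIV. (Df i z)\<^sup>2) \<partial>lborel)"
    by (intro integral_nonneg_AE) (auto intro!: AE_I2 sum_nonneg)
  then have "ennreal (real CARD('d) * h\<^sup>2) * ennreal (2 ^ CARD('d)) * (\<integral>\<^sup>+ z. ennreal (\<Sum>i\<in>UNIV. (Df i z)\<^sup>2) \<partial>lborel)
      = ennreal (bias_const * h\<^sup>2)"
    by (simp add: nn_integral_eq_integral[OF int] sum_nonneg bias_const_def ennreal_mult'[symmetric] mult_ac)
  then show ?thesis using histogram_bias_le[OF f_integrable deriv Df_cont h] by simp
qed

text \<open>Long lags: at most \<open>(tail_start + \<delta>)/\<delta>\<close> grid lags lie in \<open>(u\<^sub>0, tail_start + \<delta>]\<close>, each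
  contributing at most \<open>B\<^sub>\<pi>\<close>; the remaining ones form a Riemann sum of the tail of \<open>\<pi>\<close>.\<close>
lemma long_lag_sum_le:
  assumes d: "0 < \<delta>" "\<delta> \<le> 1"
  shows "(\<integral> y. \<kappa> y \<partial>lborel) * (\<Sum>m\<in>{m\<in>{1..n::nat}. u0 < real m * \<delta>}. \<pi> (real m * \<delta>))
           \<le> long_lag_const / \<delta>"
proof -
  define W where "W = tail_start"
  have W: "u1 \<le> W" "U \<le> W" "u0 < W" using u0_u1 by (auto simp: W_def tail_start_def)
  have B0: "0 \<le> B\<pi>" using \<pi>_bounded[of 0] by simp
  define Sa where "Sa = {m\<in>{1..n::nat}. u0 < real m * \<delta> \<and> real m * \<delta> \<le> W + \<delta>}"
  define Sb where "Sb = {m\<in>{1..n::nat}. W + \<delta> < real m * \<delta>}"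
  have "{m\<in>{1..n::nat}. u0 < real m * \<delta>} = Sa \<union> Sb"
    using W d by (auto simp: Sa_def Sb_def)
  then have "(\<Sum>m\<in>{m\<in>{1..n::nat}. u0 < real m * \<delta>}. \<pi> (real m * \<delta>))
      = (\<Sum>m\<in>Sa. \<pi> (real m * \<delta>)) + (\<Sum>m\<in>Sb. \<pi> (real m * \<delta>))"
    by (simp add: Sa_def Sb_def sum.union_disjoint disjoint_iff)
  also have "(\<Sum>m\<in>Sa. \<pi> (real m * \<delta>)) \<le> (\<Sum>m\<in>Sa. B\<pi>)"
    by (rule sum_mono) (use \<pi>_bounded in \<open>auto simp: abs_le_iff\<close>)
  also have "(\<Sum>m\<in>Sa. B\<pi>) = real (card Sa) * B\<pi>" by simp
  also have "real (card Sa) \<le> (W + \<delta>) / \<delta>"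
  proof -
    have "Sa \<subseteq> {m\<in>{1..n::nat}. real m \<le> (W + \<delta>) / \<delta>}" using d by (auto simp: Sa_def le_divide_eq)
    then have "card Sa \<le> card {m\<in>{1..n::nat}. real m \<le> (W + \<delta>) / \<delta>}" by (intro card_mono) auto
    moreover have "real (card {m\<in>{1..n::nat}. real m \<le> (W + \<delta>) / \<delta>}) \<le> (W + \<delta>) / \<delta>"
      by (rule card_le_real_bound) (use W d u0_pos in auto)
    ultimately show ?thesis by linarith
  qed
  also have "(\<Sum>m\<in>Sb. \<pi> (real m * \<delta>)) \<le> (\<integral> s. indicator {W..} s * \<pi> s \<partial>lborel) / \<delta>"
  proof -
    have "(\<lambda>s. indicator {W..} s * \<pi> s) = (\<lambda>s. indicator {W..} s *\<^sub>R (indicator {u1..} s * \<pi> s))"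
      using W by (auto simp: indicator_def fun_eq_iff)
    then have "integrable lborel (\<lambda>s. indicator {W..} s * \<pi> s)"
      using integrable_mult_indicator[OF _ \<pi>_int, of "{W..}"] by simp
    then have "\<delta> * (\<Sum>m\<in>Sb. \<pi> (real m * \<delta>)) \<le> (\<integral> s. indicator {W..} s * \<pi> s \<partial>lborel)"
      unfolding Sb_def using W \<pi>_mono \<pi>_nonneg by (intro riemann_sum_le_tail_integral[OF d(1)]) auto
    then show ?thesis using d by (simp add: le_divide_eq mult.commute)
  qed
  finally have "(\<Sum>m\<in>{m\<in>{1..n::nat}. u0 < real m * \<delta>}. \<pi> (real m * \<delta>))
      \<le> (W + \<delta>) / \<delta> * B\<pi> + (\<integral> s. indicator {W..} s * \<pi> s \<partial>lborel) / \<delta>"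
    using B0 by (simp add: mult_right_mono)
  also have "\<dots> \<le> (B\<pi> * (W + 1) + (\<integral> s. indicator {W..} s * \<pi> s \<partial>lborel)) / \<delta>"
    using d B0 by (simp add: divide_simps mult_left_mono algebra_simps)
  finally have "(\<Sum>m\<in>{m\<in>{1..n::nat}. u0 < real m * \<delta>}. \<pi> (real m * \<delta>))
      \<le> (B\<pi> * (W + 1) + (\<integral> s. indicator {W..} s * \<pi> s \<partial>lborel)) / \<delta>" .
  moreover have "0 \<le> (\<integral> y. \<kappa> y \<partial>lborel)" using \<kappa>_pos by (intro integral_nonneg_AE) (auto simp: less_imp_le)
  ultimately have "(\<integral> y. \<kappa> y \<partial>lborel) * (\<Sum>m\<in>{m\<in>{1..n::nat}. u0 < real m * \<delta>}. \<pi> (real m * \<delta>))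
      \<le> (\<integral> y. \<kappa> y \<partial>lborel) * ((B\<pi> * (W + 1) + (\<integral> s. indicator {W..} s * \<pi> s \<partial>lborel)) / \<delta>)"
    by (rule mult_left_mono)
  then show ?thesis by (simp add: long_lag_const_def W_def)
qed

lemma lag_weight_sum_le:
  assumes d: "0 < \<delta>" "\<delta> \<le> 1"
  shows "(\<Sum>m=1..n. lag_weight (real m * \<delta>))
           \<le> phi_total * \<delta> powr (- \<gamma>0) * short_lag_sum \<gamma>0 u0 \<delta> n + long_lag_const / \<delta>"
proof -
  have "(\<Sum>m=1..n. lag_weight (real m * \<delta>))
      = (\<Sum>m\<in>{1..n} \<inter> {m. real m * \<delta> \<le> u0}. (real m * \<delta>) powr (- \<gamma>0) * phi_total)
        + (\<Sum>m\<in>{1..n} \<inter> - {m. real m * \<delta> \<le> u0}. \<pi> (real m * \<delta>) * (\<integral> y. \<kappa> y \<partial>lborel))"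
    unfolding lag_weight_def phi_total_def by (rule sum.If_cases) simp
  also have "(\<Sum>m\<in>{1..n} \<inter> {m. real m * \<delta> \<le> u0}. (real m * \<delta>) powr (- \<gamma>0) * phi_total)
      = phi_total * \<delta> powr (- \<gamma>0) * short_lag_sum \<gamma>0 u0 \<delta> n"
    using d by (auto simp: short_lag_sum_def sum_distrib_left powr_mult intro!: sum.cong)
  also have "(\<Sum>m\<in>{1..n} \<inter> - {m. real m * \<delta> \<le> u0}. \<pi> (real m * \<delta>) * (\<integral> y. \<kappa> y \<partial>lborel))
      = (\<integral> y. \<kappa> y \<partial>lborel) * (\<Sum>m\<in>{m\<in>{1..n::nat}. u0 < real m * \<delta>}. \<pi> (real m * \<delta>))"
    by (auto simp: sum_distrib_left intro!: sum.cong)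
  finally show ?thesis using long_lag_sum_le[OF d, of n] by simp
qed

lemma MISE_general_bound:
  assumes n: "0 < n" and h: "0 < h" and d: "0 < \<delta>" "\<delta> \<le> 1"
  shows "MISE M X f \<delta> h n \<le> ennreal (bias_const * h\<^sup>2 + 1 / (real n * h ^ CARD('d))
      + 2 / real n * (phi_total * \<delta> powr (- \<gamma>0) * short_lag_sum \<gamma>0 u0 \<delta> n + long_lag_const / \<delta>))"
proof -
  have w0: "0 \<le> 2 / real n * (\<Sum>m=1..n. lag_weight (real m * \<delta>))"
    using d by (intro mult_nonneg_nonneg sum_nonneg lag_weight_nonneg) auto
  have "MISE M X f \<delta> h n \<le> (\<integral>\<^sup>+ x. ennreal ((cell_mass f h x / h ^ CARD('d) - f x)\<^sup>2) \<partial>lborel)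
      + ennreal (1 / (real n * h ^ CARD('d))) + ennreal (2 / real n * (\<Sum>m=1..n. lag_weight (real m * \<delta>)))"
    by (rule MISE_le[OF h d(1) n])
  also have "\<dots> \<le> ennreal (bias_const * h\<^sup>2) + ennreal (1 / (real n * h ^ CARD('d)))
      + ennreal (2 / real n * (phi_total * \<delta> powr (- \<gamma>0) * short_lag_sum \<gamma>0 u0 \<delta> n + long_lag_const / \<delta>))"
    by (intro add_mono integrated_sq_bias_le[OF h] order.refl ennreal_leI mult_left_mono
        lag_weight_sum_le[OF d]) simp
  also have "\<dots> = ennreal (bias_const * h\<^sup>2 + 1 / (real n * h ^ CARD('d))
      + 2 / real n * (phi_total * \<delta> powr (- \<gamma>0) * short_lag_sum \<gamma>0 u0 \<delta> n + long_lag_const / \<delta>))"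
    using bias_const_nonneg h order_trans[OF w0 mult_left_mono[OF lag_weight_sum_le[OF d, of n]]]
    by (simp add: ennreal_plus[symmetric] del: ennreal_plus)
  finally show ?thesis .
qed

end

section \<open>The bandwidth h = c n^(-1/(d+2))\<close>

lemma bandwidth_power:
  fixes c :: real and n D :: nat
  assumes "0 < n"
  shows "(c * real n powr (- 1 / (real D + 2))) ^ D = c ^ D * real n powr (- real D / (real D + 2))"
  using assms by (simp add: power_mult_distrib powr_power)

text \<open>The choice of \<open>h\<close> balances the squared bias \<open>h\<^sup>2\<close> against \<open>1/(nh\<^sup>d)\<close>: \<open>n h\<^sup>d h\<^sup>2 = c\<^sup>d\<^sup>+\<^sup>2\<close>.\<close>
lemma bandwidth_balance:
  fixes c :: real and n D :: nat
  assumes n: "0 < n"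
  shows "real n * (c * real n powr (- 1 / (real D + 2))) ^ D * (c * real n powr (- 1 / (real D + 2)))\<^sup>2
           = c ^ (D + 2)"
proof -
  have "real n * (c * real n powr (- 1 / (real D + 2))) ^ D * (c * real n powr (- 1 / (real D + 2)))\<^sup>2
      = c ^ D * c\<^sup>2 * (real n powr 1 * real n powr (- real D / (real D + 2)) * real n powr (- 2 / (real D + 2)))"
    unfolding bandwidth_power[OF n] using n by (simp add: power_mult_distrib powr_power mult_ac)
  also have "real n powr 1 * real n powr (- real D / (real D + 2)) * real n powr (- 2 / (real D + 2))
      = real n powr (1 + (- real D / (real D + 2)) + (- 2 / (real D + 2)))"
    by (simp only: powr_add)
  also have "1 + (- real D / (real D + 2)) + (- 2 / (real D + 2)) = 0"
    by (simp add: field_simps)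
  finally show ?thesis using n by (simp add: power_add power2_eq_square)
qed

lemma bandwidth_count:
  fixes c :: real and n D :: nat
  assumes n: "0 < n"
  shows "real n * (c * real n powr (- 1 / (real D + 2))) ^ D = c ^ D * real n powr (2 / (real D + 2))"
proof -
  have "real n * (c * real n powr (- 1 / (real D + 2))) ^ D
      = c ^ D * (real n powr 1 * real n powr (- real D / (real D + 2)))"
    unfolding bandwidth_power[OF n] using n by (simp add: mult_ac)
  also have "real n powr 1 * real n powr (- real D / (real D + 2)) = real n powr (1 + (- real D / (real D + 2)))"
    by (simp only: powr_add)
  also have "1 + (- real D / (real D + 2)) = 2 / (real D + 2)" by (simp add: field_simps)
  finally show ?thesis .
qed

lemma bandwidth_volume_tendsto_zero:
  "(\<lambda>n::nat. (c * real n powr (- 1 / (real D + 2))) ^ D) \<longlonglongrightarrow> 0" if "0 < D"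
proof -
  have "(\<lambda>n. real n powr (- 1 / (real D + 2))) \<longlonglongrightarrow> 0"
    by (rule tendsto_neg_powr[OF _ filterlim_real_sequentially]) (simp add: divide_neg_pos add_pos_pos)
  then have "(\<lambda>n. c * real n powr (- 1 / (real D + 2))) \<longlonglongrightarrow> 0"
    by (rule tendsto_mult_right_zero)
  then have "(\<lambda>n. (c * real n powr (- 1 / (real D + 2))) ^ D) \<longlonglongrightarrow> 0 ^ D"
    by (rule tendsto_power)
  then show ?thesis using that by (metis zero_power)
qed

text \<open>For the step \<open>\<delta> = d\<^sub>2 h\<^sup>d ln(h\<^sup>-\<^sup>d)\<close> of the boundary case, \<open>ln(h\<^sup>-\<^sup>d) = O(ln T)\<close> with \<open>T = n\<delta>\<close>.\<close>
lemma log_inverse_volume_le: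
  fixes c d2 :: real and n D :: nat
  defines "v \<equiv> (c * real n powr (- 1 / (real D + 2))) ^ D"
  defines "L \<equiv> ln (1 / v)"
  assumes n: "0 < n" and c: "0 < c" and d2: "0 < d2"
    and L1: "1 \<le> L" and T1: "1 \<le> ln (real n * (d2 * v * L))"
  shows "L \<le> (real D / 2 + \<bar>real D / 2 * (ln d2 + (real D + 2) * ln c)\<bar>) * ln (real n * (d2 * v * L))"
proof -
  define lnT where "lnT = ln (real n * (d2 * v * L))"
  have v: "0 < v" using n c by (simp add: v_def)
  have "v = c ^ D * real n powr (- real D / (real D + 2))"
    unfolding v_def using n by (rule bandwidth_power)
  then have ln_v: "ln v = real D * ln c - real D / (real D + 2) * ln (real n)"
    using n c by (simp add: ln_mult ln_realpow ln_powr)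
  have "real n * v = c ^ D * real n powr (2 / (real D + 2))"
    unfolding v_def using n by (rule bandwidth_count)
  then have ln_nv: "ln (real n * v) = real D * ln c + 2 / (real D + 2) * ln (real n)"
    using n c by (simp add: ln_mult ln_realpow ln_powr)
  have "L = - ln v" using v by (simp add: L_def ln_div)
  also have "\<dots> = real D / 2 * ln (real n * v) - real D / 2 * (real D + 2) * ln c"
    unfolding ln_v ln_nv by (simp add: field_simps)
  finally have L_eq: "L = real D / 2 * ln (real n * v) - real D / 2 * (real D + 2) * ln c" .
  have "lnT = ln (real n * v) + ln d2 + ln L"
    using n v d2 L1 by (simp add: lnT_def ln_mult mult_ac)
  then have "ln (real n * v) \<le> lnT - ln d2" using L1 by simp
  then have "L \<le> real D / 2 * (lnT - ln d2) - real D / 2 * (real D + 2) * ln c"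
    unfolding L_eq by (intro diff_right_mono mult_left_mono) auto
  also have "\<dots> = real D / 2 * lnT - real D / 2 * (ln d2 + (real D + 2) * ln c)"
    by (simp add: field_simps)
  also have "\<dots> \<le> real D / 2 * lnT + \<bar>real D / 2 * (ln d2 + (real D + 2) * ln c)\<bar>"
    using abs_ge_minus_self[of "real D / 2 * (ln d2 + (real D + 2) * ln c)"] by linarith
  also have "\<dots> \<le> real D / 2 * lnT + \<bar>real D / 2 * (ln d2 + (real D + 2) * ln c)\<bar> * lnT"
    using T1 mult_left_mono[OF T1, of "\<bar>real D / 2 * (ln d2 + (real D + 2) * ln c)\<bar>"]
    by (simp add: lnT_def)
  finally show ?thesis by (simp add: lnT_def algebra_simps)
qed

lemma log_step_estimates:
  fixes c d2 :: real and n D :: nat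
  defines "v \<equiv> (c * real n powr (- 1 / (real D + 2))) ^ D"
  defines "L \<equiv> ln (1 / v)"
  defines "\<delta> \<equiv> d2 * v * L"
  assumes n: "0 < n" and c: "0 < c" and d2: "0 < d2"
    and small: "v < exp (- 1)" and large: "exp 1 \<le> real n * \<delta>"
  shows "0 < \<delta>" and "1 \<le> ln (real n * \<delta>)" and "1 / (real n * v) = d2 * L / (real n * \<delta>)"
    and "L \<le> (real D / 2 + \<bar>real D / 2 * (ln d2 + (real D + 2) * ln c)\<bar>) * ln (real n * \<delta>)"
    and "- ln \<delta> \<le> L + \<bar>ln d2\<bar>"
proof -
  have v: "0 < v" using n c by (simp add: v_def)
  have "ln v < ln (exp (- 1))" using small v by (subst ln_less_cancel_iff) auto
  then have L1: "1 < L" using v by (simp add: L_def ln_div)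
  then show \<delta>: "0 < \<delta>" using d2 v by (simp add: \<delta>_def)
  show T1: "1 \<le> ln (real n * \<delta>)" using large n \<delta> by (simp add: ln_ge_iff)
  show "1 / (real n * v) = d2 * L / (real n * \<delta>)" using n v L1 d2 by (simp add: \<delta>_def)
  show "L \<le> (real D / 2 + \<bar>real D / 2 * (ln d2 + (real D + 2) * ln c)\<bar>) * ln (real n * \<delta>)"
    using log_inverse_volume_le[OF n c d2] L1 T1 by (simp add: v_def L_def \<delta>_def)
  have "ln \<delta> = ln d2 + ln v + ln L" using d2 v L1 by (simp add: \<delta>_def ln_mult)
  moreover have "ln v = - L" using v by (simp add: L_def ln_div)
  moreover have "0 \<le> ln L" using L1 by simp
  ultimately show "- ln \<delta> \<le> L + \<bar>ln d2\<bar>" by linarith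
qed

text \<open>For the step \<open>\<delta> = d\<^sub>3 h\<^sup>d\<^sup>/\<^sup>\<gamma>\<close> of the long-memory case, \<open>1/(nh\<^sup>d)\<close> is a constant multiple of
  \<open>T\<^sup>-\<^sup>e\<close> with \<open>T = n\<delta>\<close> and \<open>e = 2\<gamma>/(2\<gamma> + d(\<gamma> - 1))\<close>.\<close>
lemma inverse_count_eq_rate_power:
  fixes c d3 g :: real and n D :: nat
  defines "h \<equiv> c * real n powr (- 1 / (real D + 2))"
  defines "e \<equiv> 2 * g / (2 * g + real D * (g - 1))"
  assumes n: "0 < n" and c: "0 < c" and d3: "0 < d3" and g: "1 < g"
  shows "1 / (real n * h ^ D)
           = (real n * (d3 * h powr (real D / g))) powr (- e) / (c ^ D * (d3 * c powr (real D / g)) powr (- e))"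
proof -
  define a where "a = 1 + (- 1 / (real D + 2) * (real D / g))"
  have "h powr (real D / g) = c powr (real D / g) * real n powr (- 1 / (real D + 2) * (real D / g))"
    using c n by (simp add: h_def powr_mult powr_powr)
  then have "real n * (d3 * h powr (real D / g))
      = d3 * c powr (real D / g) * (real n powr 1 * real n powr (- 1 / (real D + 2) * (real D / g)))"
    using n by (simp add: mult_ac)
  also have "\<dots> = d3 * c powr (real D / g) * real n powr a"
    by (simp only: powr_add a_def)
  finally have T: "real n * (d3 * h powr (real D / g)) = d3 * c powr (real D / g) * real n powr a" .
  have "a * - e = - 2 / (real D + 2)"
  proof -
    have den: "0 < 2 * g + real D * (g - 1)" using g by (simp add: add_pos_nonneg)
    have "0 < g * real D + g * 2" using g by (simp add: add_nonneg_pos)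
    then have "g * real D + g * 2 \<noteq> 0" by simp
    then have a: "a = (2 * g + real D * (g - 1)) / ((real D + 2) * g)"
      using g by (simp add: a_def field_simps)
    have "(2 * g + real D * (g - 1)) / ((real D + 2) * g) * - (2 * g / (2 * g + real D * (g - 1)))
        = - 2 / (real D + 2)"
      using g den by (simp add: divide_simps)
    then show ?thesis unfolding e_def a .
  qed
  then have "(real n * (d3 * h powr (real D / g))) powr (- e)
      = (d3 * c powr (real D / g)) powr (- e) * real n powr (- 2 / (real D + 2))"
    unfolding T using d3 c by (simp add: powr_mult powr_powr)
  moreover have "1 / (real n * h ^ D) = real n powr (- 2 / (real D + 2)) / c ^ D"
    unfolding h_def bandwidth_count[OF n] using n c by (simp add: powr_minus_divide divide_simps)
  ultimately show ?thesis using c d3 by simp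
qed

section \<open>The three rates\<close>

context regular_sampled_process
begin

text \<open>The general bound for the bandwidth \<open>h = c n\<^sup>-\<^sup>1\<^sup>/\<^sup>(\<^sup>d\<^sup>+\<^sup>2\<^sup>)\<close>, where the squared bias is absorbed
  into the \<open>1/(nh\<^sup>d)\<close> term.\<close>
lemma MISE_bandwidth_bound:
  fixes c \<delta> :: real and n :: nat
  defines "h \<equiv> c * real n powr (- 1 / (real CARD('d) + 2))"
  assumes n: "0 < n" and c: "0 < c" and d: "0 < \<delta>" "\<delta> \<le> 1"
  shows "MISE M X f \<delta> h n \<le> ennreal ((bias_const * c ^ (CARD('d) + 2) + 1) / (real n * h ^ CARD('d))
           + 2 * phi_total * (\<delta> powr (- \<gamma>0) * short_lag_sum \<gamma>0 u0 \<delta> n) / real n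
           + 2 * long_lag_const / (real n * \<delta>))"
proof -
  have h: "0 < h" using n c by (simp add: h_def)
  have "real n * h ^ CARD('d) * h\<^sup>2 = c ^ (CARD('d) + 2)"
    unfolding h_def by (rule bandwidth_balance[OF n])
  then have "bias_const * h\<^sup>2 = bias_const * c ^ (CARD('d) + 2) / (real n * h ^ CARD('d))"
    using h n by (simp add: eq_divide_eq mult.commute mult.left_commute)
  then have "bias_const * h\<^sup>2 + 1 / (real n * h ^ CARD('d))
      + 2 / real n * (phi_total * \<delta> powr (- \<gamma>0) * short_lag_sum \<gamma>0 u0 \<delta> n + long_lag_const / \<delta>)
    = (bias_const * c ^ (CARD('d) + 2) + 1) / (real n * h ^ CARD('d))
      + 2 * phi_total * (\<delta> powr (- \<gamma>0) * short_lag_sum \<gamma>0 u0 \<delta> n) / real n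
      + 2 * long_lag_const / (real n * \<delta>)"
    by (simp add: add_divide_distrib distrib_left mult.assoc)
  then show ?thesis using MISE_general_bound[OF n h d] by simp
qed

definition rate_lt1_const :: "real \<Rightarrow> real \<Rightarrow> real" where
  "rate_lt1_const c d1 = (bias_const * c ^ (CARD('d) + 2) + 1) * d1
     + 2 * phi_total * (u0 powr (1 - \<gamma>0) / (1 - \<gamma>0)) + 2 * long_lag_const"

lemma MISE_lt1_at:
  fixes c d1 :: real and n :: nat
  defines "h \<equiv> c * real n powr (- 1 / (real CARD('d) + 2))"
  defines "\<delta> \<equiv> d1 * h ^ CARD('d)"
  assumes g: "0 < \<gamma>0" "\<gamma>0 < 1" and n: "0 < n" and c: "0 < c" and d1: "0 < d1" and d: "\<delta> \<le> 1"
  shows "MISE M X f \<delta> h n \<le> ennreal (rate_lt1_const c d1 / (real n * \<delta>))"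
proof -
  have dpos: "0 < \<delta>" using n c d1 by (simp add: \<delta>_def h_def)
  have count: "real n * h ^ CARD('d) = real n * \<delta> / d1" using d1 by (simp add: \<delta>_def)
  have "2 * phi_total * (\<delta> powr (- \<gamma>0) * short_lag_sum \<gamma>0 u0 \<delta> n) / real n
      \<le> 2 * (phi_total * (u0 powr (1 - \<gamma>0) / (1 - \<gamma>0) / \<delta>)) / real n"
    unfolding mult.assoc using short_lag_sum_lt1[OF dpos u0_pos g] phi_total_nonneg
    by (intro divide_right_mono mult_left_mono) auto
  moreover have "real n \<noteq> 0" "\<delta> \<noteq> 0" "d1 \<noteq> 0" "1 - \<gamma>0 \<noteq> 0" using n dpos d1 g by auto
  then have "(bias_const * c ^ (CARD('d) + 2) + 1) / (real n * h ^ CARD('d))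
      + 2 * (phi_total * (u0 powr (1 - \<gamma>0) / (1 - \<gamma>0) / \<delta>)) / real n
      + 2 * long_lag_const / (real n * \<delta>) = rate_lt1_const c d1 / (real n * \<delta>)"
    unfolding count rate_lt1_const_def by (simp add: field_simps)
  ultimately show ?thesis
    using MISE_bandwidth_bound[OF n c dpos d] unfolding h_def[symmetric]
    by (elim order_trans) (intro ennreal_leI, linarith)
qed

definition rate_eq1_const :: "real \<Rightarrow> real \<Rightarrow> real" where
  "rate_eq1_const c d2 =
     ((bias_const * c ^ (CARD('d) + 2) + 1) * d2 + 2 * phi_total)
       * (real CARD('d) / 2 + \<bar>real CARD('d) / 2 * (ln d2 + (real CARD('d) + 2) * ln c)\<bar>)
     + 2 * phi_total * (1 + \<bar>ln u0\<bar> + \<bar>ln d2\<bar>) + 2 * long_lag_const"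

lemma MISE_eq1_at:
  fixes c d2 :: real and n :: nat
  defines "h \<equiv> c * real n powr (- 1 / (real CARD('d) + 2))"
  defines "\<delta> \<equiv> d2 * h ^ CARD('d) * ln (1 / h ^ CARD('d))"
  defines "T \<equiv> real n * \<delta>"
  assumes g: "\<gamma>0 = 1" and n: "0 < n" and c: "0 < c" and d2: "0 < d2"
    and d: "\<delta> \<le> 1" "\<delta> \<le> u0" and small: "h ^ CARD('d) < exp (- 1)" and large: "exp 1 \<le> T"
  shows "MISE M X f \<delta> h n \<le> ennreal (rate_eq1_const c d2 * ln T / T)"
proof -
  define L where "L = ln (1 / h ^ CARD('d))"
  define K where "K = real CARD('d) / 2 + \<bar>real CARD('d) / 2 * (ln d2 + (real CARD('d) + 2) * ln c)\<bar>"
  define A where "A = (bias_const * c ^ (CARD('d) + 2) + 1) * d2"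
  note est = log_step_estimates[OF n c d2, of "CARD('d)", folded h_def L_def \<delta>_def T_def, OF small large]
  have dpos: "0 < \<delta>" and lnT: "1 \<le> ln T" and L_le: "L \<le> K * ln T" and ln_\<delta>: "- ln \<delta> \<le> L + \<bar>ln d2\<bar>"
    using est by (simp_all add: K_def)
  have Tpos: "0 < T" using n dpos by (simp add: T_def)
  define k where "k = 1 + ln u0 - ln \<delta>"
  have "(bias_const * c ^ (CARD('d) + 2) + 1) / (real n * h ^ CARD('d))
      = (bias_const * c ^ (CARD('d) + 2) + 1) * (1 / (real n * h ^ CARD('d)))" by simp
  also have "\<dots> = A * L / T" unfolding est(3) by (simp add: A_def)
  moreover have "2 * phi_total * (\<delta> powr (- \<gamma>0) * short_lag_sum \<gamma>0 u0 \<delta> n) / real n \<le> 2 * phi_total * k / T"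
  proof -
    have "\<delta> powr (- \<gamma>0) * short_lag_sum \<gamma>0 u0 \<delta> n \<le> k / \<delta>"
      using short_lag_sum_eq1[OF dpos d(2), of n] dpos u0_pos g
      by (simp add: k_def powr_minus_divide ln_div divide_right_mono)
    then have "2 * phi_total * (\<delta> powr (- \<gamma>0) * short_lag_sum \<gamma>0 u0 \<delta> n) / real n \<le> 2 * phi_total * (k / \<delta>) / real n"
      using phi_total_nonneg by (intro divide_right_mono mult_left_mono) auto
    then show ?thesis by (simp add: T_def mult.commute)
  qed
  ultimately have "MISE M X f \<delta> h n \<le> ennreal ((A * L + 2 * phi_total * k + 2 * long_lag_const) / T)"
    using MISE_bandwidth_bound[OF n c dpos d(1)] unfolding h_def[symmetric]
    by (elim order_trans) (intro ennreal_leI, simp add: add_divide_distrib T_def)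
  also have "A * L + 2 * phi_total * k + 2 * long_lag_const \<le> rate_eq1_const c d2 * ln T"
  proof -
    have "k \<le> K * ln T + (1 + \<bar>ln u0\<bar> + \<bar>ln d2\<bar>) * ln T"
      using ln_\<delta> L_le mult_left_mono[OF lnT, of "1 + \<bar>ln u0\<bar> + \<bar>ln d2\<bar>"] by (simp add: k_def)
    then have "2 * phi_total * k \<le> 2 * phi_total * (K * ln T + (1 + \<bar>ln u0\<bar> + \<bar>ln d2\<bar>) * ln T)"
      using phi_total_nonneg by (intro mult_left_mono) auto
    moreover have "A * L \<le> A * (K * ln T)"
      using L_le bias_const_nonneg c d2 by (intro mult_left_mono) (auto simp: A_def)
    moreover have "2 * long_lag_const \<le> 2 * long_lag_const * ln T"
      using mult_left_mono[OF lnT, of "2 * long_lag_const"] long_lag_const_nonneg by simp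
    ultimately show ?thesis by (simp add: rate_eq1_const_def A_def K_def algebra_simps)
  qed
  then have "(A * L + 2 * phi_total * k + 2 * long_lag_const) / T \<le> rate_eq1_const c d2 * ln T / T"
    using Tpos by (intro divide_right_mono) auto
  finally show ?thesis by (simp add: ennreal_leI)
qed

definition rate_gt1_const :: "real \<Rightarrow> real \<Rightarrow> real" where
  "rate_gt1_const c d3 =
     (bias_const * c ^ (CARD('d) + 2) + 1 + 2 * phi_total * (\<gamma>0 / (\<gamma>0 - 1)) * d3 powr (- \<gamma>0))
       / (c ^ CARD('d) * (d3 * c powr (real CARD('d) / \<gamma>0)) powr (- (2 * \<gamma>0 / (2 * \<gamma>0 + real CARD('d) * (\<gamma>0 - 1)))))
     + 2 * long_lag_const"

lemma MISE_gt1_at: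
  fixes c d3 :: real and n :: nat
  defines "h \<equiv> c * real n powr (- 1 / (real CARD('d) + 2))"
  defines "\<delta> \<equiv> d3 * h powr (real CARD('d) / \<gamma>0)"
  defines "T \<equiv> real n * \<delta>"
  defines "e \<equiv> 2 * \<gamma>0 / (2 * \<gamma>0 + real CARD('d) * (\<gamma>0 - 1))"
  assumes g: "1 < \<gamma>0" and n: "0 < n" and c: "0 < c" and d3: "0 < d3" and d: "\<delta> \<le> 1" and T1: "1 \<le> T"
  shows "MISE M X f \<delta> h n \<le> ennreal (rate_gt1_const c d3 * T powr (- e))"
proof -
  define K0 where "K0 = c ^ CARD('d) * (d3 * c powr (real CARD('d) / \<gamma>0)) powr (- e)"
  define Q where "Q = bias_const * c ^ (CARD('d) + 2) + 1 + 2 * phi_total * (\<gamma>0 / (\<gamma>0 - 1)) * d3 powr (- \<gamma>0)"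
  have hpos: "0 < h" using n c by (simp add: h_def)
  have dpos: "0 < \<delta>" using hpos d3 by (simp add: \<delta>_def)
  have count: "1 / (real n * h ^ CARD('d)) = T powr (- e) / K0"
    using inverse_count_eq_rate_power[OF n c d3 g] by (simp add: h_def T_def \<delta>_def e_def K0_def)
  have "\<delta> powr (- \<gamma>0) = d3 powr (- \<gamma>0) * h powr (- real CARD('d))"
    using d3 hpos g by (simp add: \<delta>_def powr_mult powr_powr)
  then have "\<delta> powr (- \<gamma>0) = d3 powr (- \<gamma>0) / h ^ CARD('d)"
    using hpos by (simp add: powr_minus_divide powr_realpow)
  moreover have "\<delta> powr (- \<gamma>0) * short_lag_sum \<gamma>0 u0 \<delta> n \<le> \<delta> powr (- \<gamma>0) * (\<gamma>0 / (\<gamma>0 - 1))"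
    by (intro mult_left_mono short_lag_sum_gt1[OF dpos g]) simp
  ultimately have "\<delta> powr (- \<gamma>0) * short_lag_sum \<gamma>0 u0 \<delta> n \<le> d3 powr (- \<gamma>0) / h ^ CARD('d) * (\<gamma>0 / (\<gamma>0 - 1))"
    by simp
  then have "2 * phi_total * (\<delta> powr (- \<gamma>0) * short_lag_sum \<gamma>0 u0 \<delta> n) / real n
      \<le> 2 * phi_total * (d3 powr (- \<gamma>0) / h ^ CARD('d) * (\<gamma>0 / (\<gamma>0 - 1))) / real n"
    using phi_total_nonneg by (intro divide_right_mono mult_left_mono) auto
  also have "\<dots> = 2 * phi_total * (\<gamma>0 / (\<gamma>0 - 1)) * d3 powr (- \<gamma>0) * (1 / (real n * h ^ CARD('d)))"
    by (simp add: field_simps)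
  finally have short_term: "2 * phi_total * (\<delta> powr (- \<gamma>0) * short_lag_sum \<gamma>0 u0 \<delta> n) / real n
      \<le> 2 * phi_total * (\<gamma>0 / (\<gamma>0 - 1)) * d3 powr (- \<gamma>0) * (1 / (real n * h ^ CARD('d)))" .
  have "Q * (1 / (real n * h ^ CARD('d))) = (bias_const * c ^ (CARD('d) + 2) + 1) / (real n * h ^ CARD('d))
      + 2 * phi_total * (\<gamma>0 / (\<gamma>0 - 1)) * d3 powr (- \<gamma>0) * (1 / (real n * h ^ CARD('d)))"
    by (simp add: Q_def add_divide_distrib)
  moreover have "2 * long_lag_const * (1 / T) = 2 * long_lag_const / (real n * \<delta>)"
    by (simp add: T_def)
  ultimately have "MISE M X f \<delta> h n \<le> ennreal (Q * (1 / (real n * h ^ CARD('d))) + 2 * long_lag_const * (1 / T))"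
    using MISE_bandwidth_bound[OF n c dpos d] short_term unfolding h_def[symmetric]
    by (elim order_trans) (intro ennreal_leI, linarith)
  also have "\<dots> \<le> ennreal (Q / K0 * T powr (- e) + 2 * long_lag_const * T powr (- e))"
  proof (intro ennreal_leI add_mono)
    have "e \<le> 1" using g by (simp add: e_def divide_le_eq_1 add_pos_nonneg)
    then have "T powr (- 1) \<le> T powr (- e)" using T1 by (intro powr_mono) auto
    then have "1 / T \<le> T powr (- e)" using T1 by (simp add: powr_minus_divide)
    then show "2 * long_lag_const * (1 / T) \<le> 2 * long_lag_const * T powr (- e)"
      using long_lag_const_nonneg by (intro mult_left_mono) auto
  qed (simp add: count)
  also have "Q / K0 * T powr (- e) + 2 * long_lag_const * T powr (- e) = rate_gt1_const c d3 * T powr (- e)"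
    by (simp add: rate_gt1_const_def Q_def K0_def e_def distrib_right)
  finally show ?thesis .
qed

text \<open>The three rates as statements about the sequences \<open>h\<^sub>n\<close>, \<open>\<delta>\<^sub>n\<close>: the conditions of the pointwise
  bounds hold eventually because \<open>\<delta>\<^sub>n \<rightarrow> 0\<close>, \<open>h\<^sub>n \<rightarrow> 0\<close> and \<open>T\<^sub>n \<rightarrow> \<infinity>\<close>.\<close>
lemma MISE_rate_lt1:
  fixes c d1 :: real
  defines "h \<equiv> \<lambda>n::nat. c * real n powr (- 1 / (real CARD('d) + 2))"
  defines "\<delta> \<equiv> \<lambda>n. d1 * h n ^ CARD('d)"
  assumes g: "0 < \<gamma>0" "\<gamma>0 < 1" and c: "0 < c" and d1: "0 < d1" and lim: "\<delta> \<longlonglongrightarrow> 0"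
  shows "\<exists>C. \<forall>\<^sub>F n in sequentially. MISE M X f (\<delta> n) (h n) n \<le> ennreal (C / (real n * \<delta> n))"
proof
  show "\<forall>\<^sub>F n in sequentially. MISE M X f (\<delta> n) (h n) n \<le> ennreal (rate_lt1_const c d1 / (real n * \<delta> n))"
    using eventually_gt_at_top[of 0] order_tendstoD(2)[OF lim zero_less_one]
    by eventually_elim (unfold h_def \<delta>_def, intro MISE_lt1_at[OF g _ c d1], auto simp: h_def \<delta>_def)
qed

lemma MISE_rate_eq1:
  fixes c d2 :: real
  defines "h \<equiv> \<lambda>n::nat. c * real n powr (- 1 / (real CARD('d) + 2))"
  defines "\<delta> \<equiv> \<lambda>n. d2 * h n ^ CARD('d) * ln (1 / h n ^ CARD('d))"
  defines "T \<equiv> \<lambda>n. real n * \<delta> n"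
  assumes g: "\<gamma>0 = 1" and c: "0 < c" and d2: "0 < d2" and lim: "\<delta> \<longlonglongrightarrow> 0"
    and Tlim: "filterlim T at_top sequentially"
  shows "\<exists>C. \<forall>\<^sub>F n in sequentially. MISE M X f (\<delta> n) (h n) n \<le> ennreal (C * ln (T n) / T n)"
proof
  have "0 < min 1 u0" "0 < CARD('d)" using u0_pos by simp_all
  show "\<forall>\<^sub>F n in sequentially. MISE M X f (\<delta> n) (h n) n \<le> ennreal (rate_eq1_const c d2 * ln (T n) / T n)"
    using eventually_gt_at_top[of 0] order_tendstoD(2)[OF lim \<open>0 < min 1 u0\<close>]
      Tlim[unfolded filterlim_at_top, rule_format, of "exp 1"]
      order_tendstoD(2)[OF bandwidth_volume_tendsto_zero[OF \<open>0 < CARD('d)\<close>] exp_gt_zero[of "- 1"]]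
    by eventually_elim (unfold h_def \<delta>_def T_def, intro MISE_eq1_at[OF g _ c d2], auto simp: h_def \<delta>_def T_def)
qed

lemma MISE_rate_gt1:
  fixes c d3 :: real
  defines "h \<equiv> \<lambda>n::nat. c * real n powr (- 1 / (real CARD('d) + 2))"
  defines "\<delta> \<equiv> \<lambda>n. d3 * h n powr (real CARD('d) / \<gamma>0)"
  defines "T \<equiv> \<lambda>n. real n * \<delta> n"
  assumes g: "1 < \<gamma>0" and c: "0 < c" and d3: "0 < d3" and lim: "\<delta> \<longlonglongrightarrow> 0"
    and Tlim: "filterlim T at_top sequentially"
  shows "\<exists>C. \<forall>\<^sub>F n in sequentially. MISE M X f (\<delta> n) (h n) n
           \<le> ennreal (C * T n powr (- (2 * \<gamma>0 / (2 * \<gamma>0 + real CARD('d) * (\<gamma>0 - 1)))))"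
proof
  show "\<forall>\<^sub>F n in sequentially. MISE M X f (\<delta> n) (h n) n
           \<le> ennreal (rate_gt1_const c d3 * T n powr (- (2 * \<gamma>0 / (2 * \<gamma>0 + real CARD('d) * (\<gamma>0 - 1)))))"
    using eventually_gt_at_top[of 0] order_tendstoD(2)[OF lim zero_less_one]
      Tlim[unfolded filterlim_at_top, rule_format, of 1]
    by eventually_elim (unfold h_def \<delta>_def T_def, intro MISE_gt1_at[OF g _ c d3], auto simp: h_def \<delta>_def T_def)
qed

end

text \<open>A0(i) gives continuous first partial derivatives, since they are themselves differentiable.\<close>
lemma continuous_on_partial_derivative:
  assumes "\<And>x. (g has_derivative (\<lambda>v. \<Sum>j\<in>UNIV. Dg j x * v $ j)) (at x)"
  shows "continuous_on UNIV g"
  using assms by (intro continuous_at_imp_continuous_on ballI has_derivative_continuous) blast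

theorem corollary1:
  fixes M :: "'a measure"
    and X :: "real \<Rightarrow> 'a \<Rightarrow> real ^ 'd::finite"
    and f :: "real ^ 'd \<Rightarrow> real"
    and fu :: "real \<Rightarrow> real ^ 'd \<Rightarrow> real ^ 'd \<Rightarrow> real"
    and \<gamma>0 u0 c :: real
  assumes prob: "prob_space M"
    and meas: "(\<lambda>p. X (fst p) (snd p)) \<in> borel_measurable (lborel \<Otimes>\<^sub>M M)"
    and f_nonneg: "\<And>x. 0 \<le> f x"
    and dens: "\<And>t. distributed M lborel (X t) (\<lambda>x. ennreal (f x))"
    and fu_nonneg: "\<And>u y z. 0 < u \<Longrightarrow> 0 \<le> fu u y z"
    and joint: "\<And>s t. s \<noteq> t \<Longrightarrow>
        distributed M (lborel \<Otimes>\<^sub>M lborel) (\<lambda>\<omega>. (X s \<omega>, X t \<omega>))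
          (\<lambda>p. ennreal (fu \<bar>t - s\<bar> (fst p) (snd p)))"
    \<comment> \<open>A0 (i): f is C^2, first and second order partial derivatives square integrable\<close>
    and A0_i: "\<exists>Df D2f.
        (\<forall>x. (f has_derivative (\<lambda>v. \<Sum>i\<in>UNIV. Df i x * v $ i)) (at x)) \<and>
        (\<forall>i x. (Df i has_derivative (\<lambda>v. \<Sum>j\<in>UNIV. D2f i j x * v $ j)) (at x)) \<and>
        (\<forall>i j. continuous_on UNIV (D2f i j)) \<and>
        (\<forall>i. integrable lborel (\<lambda>x. (Df i x)\<^sup>2)) \<and>
        (\<forall>i j. integrable lborel (\<lambda>x. (D2f i j x)\<^sup>2))"
    \<comment> \<open>A0 (ii)\<close>
    and A0_ii: "continuous_on UNIV f" "bounded (range f)"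
    \<comment> \<open>A1' (i)\<close>
    and \<gamma>0_pos: "0 < \<gamma>0" and u0_pos: "0 < u0"
    and A1_i: "\<exists>\<phi> :: real ^ 'd \<Rightarrow> real. (\<forall>y. 0 < \<phi> y) \<and> continuous_on UNIV \<phi> \<and> integrable lborel \<phi> \<and>
        (\<forall>y u z. 0 < u \<longrightarrow> u \<le> u0 \<longrightarrow> fu u y z \<le> \<phi> y * u powr (- \<gamma>0))"
    \<comment> \<open>A1' (ii)\<close>
    and A1_ii: "\<exists>(k :: real ^ 'd \<Rightarrow> real) (\<pi> :: real \<Rightarrow> real) u1.
        (\<forall>y. 0 < k y) \<and> continuous_on UNIV k \<and> integrable lborel k \<and>
        bounded (range \<pi>) \<and> (\<exists>U. \<forall>a b. U \<le> a \<longrightarrow> a \<le> b \<longrightarrow> \<pi> b \<le> \<pi> a) \<and>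
        u0 < u1 \<and> set_integrable lborel {u1..} \<pi> \<and>
        (\<forall>y u z. u0 \<le> u \<longrightarrow> \<bar>fu u y z - f y * f z\<bar> \<le> k y * \<pi> u)"
    and c_pos: "0 < c"
  shows
    "let d = real CARD('d);
         h = (\<lambda>n::nat. c * real n powr (- 1 / (d + 2)))
     in
     (\<gamma>0 < 1 \<longrightarrow> (\<forall>d1>0. let \<delta> = (\<lambda>n. d1 * h n ^ CARD('d)); T = (\<lambda>n. real n * \<delta> n) in
        (\<delta> \<longlonglongrightarrow> 0) \<longrightarrow> filterlim T at_top sequentially \<longrightarrow>
        (\<exists>C. \<forall>\<^sub>F n in sequentially. MISE M X f (\<delta> n) (h n) n \<le> ennreal (C / T n)))) \<and>
     (\<gamma>0 = 1 \<longrightarrow> (\<forall>d2>0. let \<delta> = (\<lambda>n. d2 * h n ^ CARD('d) * ln (1 / h n ^ CARD('d))); T = (\<lambda>n. real n * \<delta> n) in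
        (\<delta> \<longlonglongrightarrow> 0) \<longrightarrow> filterlim T at_top sequentially \<longrightarrow>
        (\<exists>C. \<forall>\<^sub>F n in sequentially. MISE M X f (\<delta> n) (h n) n \<le> ennreal (C * ln (T n) / T n)))) \<and>
     (1 < \<gamma>0 \<longrightarrow> (\<forall>d3>0. let \<delta> = (\<lambda>n. d3 * h n powr (d / \<gamma>0)); T = (\<lambda>n. real n * \<delta> n) in
        (\<delta> \<longlonglongrightarrow> 0) \<longrightarrow> filterlim T at_top sequentially \<longrightarrow>
        (\<exists>C. \<forall>\<^sub>F n in sequentially. MISE M X f (\<delta> n) (h n) n
              \<le> ennreal (C * T n powr (- (2 * \<gamma>0 / (2 * \<gamma>0 + d * (\<gamma>0 - 1))))))))"
proof -
  obtain Df D2f where deriv: "\<And>x. (f has_derivative (\<lambda>v. \<Sum>i\<in>UNIV. Df i x * v $ i)) (at x)"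
    and deriv2: "\<And>i x. (Df i has_derivative (\<lambda>v. \<Sum>j\<in>UNIV. D2f i j x * v $ j)) (at x)"
    and Df_sq_int: "\<And>i. integrable lborel (\<lambda>x. (Df i x)\<^sup>2)"
    using A0_i by blast
  obtain \<phi> :: "real ^ 'd \<Rightarrow> real" where \<phi>: "\<forall>y. 0 < \<phi> y" "continuous_on UNIV \<phi>" "integrable lborel \<phi>"
    "\<forall>y u z. 0 < u \<longrightarrow> u \<le> u0 \<longrightarrow> fu u y z \<le> \<phi> y * u powr (- \<gamma>0)"
    using A1_i by blast
  obtain \<kappa> :: "real ^ 'd \<Rightarrow> real" and \<pi> :: "real \<Rightarrow> real" and u1 where \<kappa>\<pi>:
    "\<forall>y. 0 < \<kappa> y" "continuous_on UNIV \<kappa>" "integrable lborel \<kappa>" "bounded (range \<pi>)"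
    "\<exists>U. \<forall>a b. U \<le> a \<longrightarrow> a \<le> b \<longrightarrow> \<pi> b \<le> \<pi> a" "u0 < u1" "set_integrable lborel {u1..} \<pi>"
    "\<forall>y u z. u0 \<le> u \<longrightarrow> \<bar>fu u y z - f y * f z\<bar> \<le> \<kappa> y * \<pi> u"
    using A1_ii by blast
  obtain U where \<pi>_mono: "\<And>a b. U \<le> a \<Longrightarrow> a \<le> b \<Longrightarrow> \<pi> b \<le> \<pi> a" using \<kappa>\<pi>(5) by blast
  obtain B\<pi> where "\<forall>v\<in>range \<pi>. norm v \<le> B\<pi>" using \<kappa>\<pi>(4) unfolding bounded_iff by blast
  then have \<pi>_bounded: "\<And>u. \<bar>\<pi> u\<bar> \<le> B\<pi>" by auto
  have \<pi>_int: "integrable lborel (\<lambda>s. indicator {u1..} s * \<pi> s)"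
    using \<kappa>\<pi>(7) by (simp add: set_integrable_def)
  interpret regular_sampled_process M X f fu \<gamma>0 u0 \<phi> \<kappa> \<pi> Df U u1 B\<pi>
    by (intro regular_sampled_process.intro sampled_process.intro regular_sampled_process_axioms.intro)
       (fact prob f_nonneg dens joint A0_ii(1) u0_pos \<phi>[rule_format] \<kappa>\<pi>[rule_format]
        \<pi>_mono \<pi>_bounded deriv Df_sq_int continuous_on_partial_derivative[OF deriv2] \<pi>_int)+
  show ?thesis
    using MISE_rate_lt1[OF \<gamma>0_pos _ c_pos] MISE_rate_eq1[OF _ c_pos] MISE_rate_gt1[OF _ c_pos]
    by (simp add: Let_def)
qed

end
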